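(* Let $r,k\in\mathbb Z$ with $0\le k\le r$ and suppose Assumptions (A1), (A2), (A3) hold. Then for $1\le n\le N$, $0\le l\le r$ and all $v\in C^{k_{\mathcal J}+1}(\overline I_n,\mathbb R^d)$, $$\sup_{t\in I_n}\|(\mathcal J_nv)^{(l)}(t)\|\le C\sum_{j=0}^{k_{\mathcal J}+1}\big(\tfrac{\tau_n}{2}\big)^{j-l}\sup_{t\in I_n}\|v^{(j)}(t)\|$$ with $C$ independent of $\tau_n$, $n$ and $v$.
   Context: Mesh $t_0<\dots<t_N$, $I_n=(t_{n-1},t_n]$, $\tau_n=t_n-t_{n-1}\le1$; one-sided limits $v(t_n^\pm)$. $T_n(\hat t)=\frac{t_n+t_{n-1}}{2}+\frac{\tau_n}{2}\hat t$. $\|\cdot\|$, $(\cdot,\cdot)$ Euclidean norm/inner product on $\mathbb R^d$; $P_s$ polynomials of degree $\le s$; $\delta_{i,j}$ Kronecker symbol. Operators: $\widehat{\mathscr I}$ linear functional, $\widehat{\mathcal I}$ linear operator; $k_{\mathscr I},k_{\mathcal I}\ge0$ smallest integers such that they are well defined on $C^{k_{\mathscr I}}([-1,1])$ resp. $C^{k_{\mathcal I}}([-1,1])$; $\widehat{\mathcal I}\hat v\in C^l$ whenever $\hat v\in C^{\max\{k_{\mathcal I},l\}}$. Local: $\mathscr I_n[\varphi]=\frac{\tau_n}{2}\widehat{\mathscr I}[\varphi\circ T_n]$, $\mathcal I_n\psi=(\widehat{\mathcal I}(\psi\circ T_n))\circ T_n^{-1}$, componentwise. $k_{\mathcal J}:=\max\{\lfloor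 k/2\rfloor-1,k_{\mathscr I},k_{\mathcal I}\}$. $\mathcal J_n v\in P_r(I_n,\mathbb R^d)$ for $v\in C^{k_{\mathcal J}+1}(\overline I_n,\mathbb R^d)$ is defined by: if $k\ge1$, $(\mathcal J_nv)^{(i)}(t_{n-1}^+)=v^{(i)}(t_{n-1}^+)$, $i=0,\dots,\lfloor (k-1)/2\rfloor$; if $k\ge2$, $(\mathcal J_nv)^{(i)}(t_n^-)=v^{(i)}(t_n^-)$, $i=1,\dots,\lfloor k/2\rfloor$; and $\mathscr I_n[((\mathcal J_nv)',\varphi)]+\delta_{0,k}(\mathcal J_nv(t_{n-1}^+),\varphi(t_{n-1}^+))=\mathscr I_n[(\mathcal I_n(v'),\varphi)]+\delta_{0,k}(v(t_{n-1}^+),\varphi(t_{n-1}^+))$ for all $\varphi\in P_{r-k}(I_n,\mathbb R^d)$ (well defined under (A1)). (A1): whenever $\hat\psi\in P_{r-\max\{1,k\}}([-1,1])$ satisfies $\widehat{\mathscr I}[(1-\hat t)^{\lfloor k/2\rfloor}(1+\hat t)^{|\lfloor (k-1)/2\rfloor|}\hat\psi\hat\varphi]=0$ for all $\hat\varphi\in P_{r-\max\{1,k\}}([-1,1])$, then $\hat\psi\equiv0$. (A2): $\|\widehat{\mathscr I}[\hat\varphi]\|\le\mathfrak C_0\sum_{j=0}^{k_{\mathscr I}}\sup_{[-1,1]}\|\hat\varphi^{(j)}\|$ for all $\hat\varphi\in C^{k_{\mathscr I}}([-1,1],\mathbb R^d)$. (A3): for $0\le l\le k_{\mathscr I}$,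 $\sup_{[-1,1]}\|(\widehat{\mathcal I}\hat\varphi)^{(l)}\|\le\mathfrak C_1\sum_{j=0}^{\max\{k_{\mathcal I},l\}}\sup_{[-1,1]}\|\hat\varphi^{(j)}\|$ for all $\hat\varphi\in C^{\max\{k_{\mathcal I},l\}}([-1,1],\mathbb R^d)$. *)

theory Defs
  imports "HOL-Analysis.Analysis" "HOL-Computational_Algebra.Polynomial"
begin

fun nderiv :: "real set \<Rightarrow> nat \<Rightarrow> (real \<Rightarrow> 'a::real_normed_vector) \<Rightarrow> real \<Rightarrow> 'a" where
  "nderiv S 0 f = f"
| "nderiv S (Suc j) f = (\<lambda>x. vector_derivative (nderiv S j f) (at x within S))"

definition Ck_on :: "nat \<Rightarrow> real set \<Rightarrow> (real \<Rightarrow> 'a::real_normed_vector) \<Rightarrow> bool" where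
  "Ck_on k S f \<longleftrightarrow>
     (\<forall>j<k. \<forall>x\<in>S. (nderiv S j f has_vector_derivative nderiv S (Suc j) f x) (at x within S))
   \<and> (\<forall>j\<le>k. continuous_on S (nderiv S j f))"

definition supn :: "real set \<Rightarrow> (real \<Rightarrow> 'a::real_normed_vector) \<Rightarrow> real" where
  "supn S f = (SUP x\<in>S. norm (f x))"

text \<open>Scalar polynomials of degree \<le> m (m may be negative, then only 0).\<close>
definition Pdeg :: "int \<Rightarrow> real poly set" where
  "Pdeg m = {p. p = 0 \<or> int (degree p) \<le> m}"

definition vpolys :: "nat \<Rightarrow> (real \<Rightarrow> 'a::real_vector) set" where
  "vpolys s = {f. \<exists>c. \<forall>x. f x = (\<Sum>i\<le>s. (x ^ i) *\<^sub>R c i)}"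

definition Tmap :: "real \<Rightarrow> real \<Rightarrow> real \<Rightarrow> real" where
  "Tmap a b s = (a + b) / 2 + (b - a) / 2 * s"

definition Tinv :: "real \<Rightarrow> real \<Rightarrow> real \<Rightarrow> real" where
  "Tinv a b x = (2 * x - a - b) / (b - a)"

definition vecJ :: "((real \<Rightarrow> real) \<Rightarrow> real) \<Rightarrow> (real \<Rightarrow> 'a::euclidean_space) \<Rightarrow> 'a" where
  "vecJ Jh f = (\<Sum>u\<in>Basis. Jh (\<lambda>s. f s \<bullet> u) *\<^sub>R u)"

definition vecI :: "((real \<Rightarrow> real) \<Rightarrow> real \<Rightarrow> real) \<Rightarrow> (real \<Rightarrow> 'a::euclidean_space) \<Rightarrow> real \<Rightarrow> 'a" where
  "vecI Ih f = (\<lambda>s. \<Sum>u\<in>Basis. Ih (\<lambda>x. f x \<bullet> u) s *\<^sub>R u)"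

definition locJ :: "((real \<Rightarrow> real) \<Rightarrow> real) \<Rightarrow> real \<Rightarrow> real \<Rightarrow> (real \<Rightarrow> real) \<Rightarrow> real" where
  "locJ Jh a b g = (b - a) / 2 * Jh (g \<circ> Tmap a b)"

definition locI :: "((real \<Rightarrow> real) \<Rightarrow> real \<Rightarrow> real) \<Rightarrow> real \<Rightarrow> real \<Rightarrow> (real \<Rightarrow> 'a::euclidean_space) \<Rightarrow> real \<Rightarrow> 'a" where
  "locI Ih a b \<psi> = vecI Ih (\<psi> \<circ> Tmap a b) \<circ> Tinv a b"

definition Jn_cond :: "nat \<Rightarrow> nat \<Rightarrow> ((real \<Rightarrow> real) \<Rightarrow> real) \<Rightarrow> ((real \<Rightarrow> real) \<Rightarrow> real \<Rightarrow> real)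
    \<Rightarrow> real \<Rightarrow> real \<Rightarrow> (real \<Rightarrow> 'a::euclidean_space) \<Rightarrow> (real \<Rightarrow> 'a) \<Rightarrow> bool" where
  "Jn_cond r k Jh Ih a b v p \<longleftrightarrow>
     p \<in> vpolys r
   \<and> (1 \<le> k \<longrightarrow> (\<forall>i \<le> (k - 1) div 2. nderiv {a..b} i p a = nderiv {a..b} i v a))
   \<and> (2 \<le> k \<longrightarrow> (\<forall>i\<in>{1..k div 2}. nderiv {a..b} i p b = nderiv {a..b} i v b))
   \<and> (\<forall>\<phi>\<in>vpolys (r - k).
        locJ Jh a b (\<lambda>x. nderiv {a..b} 1 p x \<bullet> \<phi> x) + (if k = 0 then p a \<bullet> \<phi> a else 0)
      = locJ Jh a b (\<lambda>x. locI Ih a b (nderiv {a..b} 1 v) x \<bullet> \<phi> x) + (if k = 0 then v a \<bullet> \<phi> a else 0))"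

definition Jn :: "nat \<Rightarrow> nat \<Rightarrow> ((real \<Rightarrow> real) \<Rightarrow> real) \<Rightarrow> ((real \<Rightarrow> real) \<Rightarrow> real \<Rightarrow> real)
    \<Rightarrow> real \<Rightarrow> real \<Rightarrow> (real \<Rightarrow> 'a::euclidean_space) \<Rightarrow> (real \<Rightarrow> 'a)" where
  "Jn r k Jh Ih a b v = (THE p. Jn_cond r k Jh Ih a b v p)"

definition A1 :: "nat \<Rightarrow> nat \<Rightarrow> ((real \<Rightarrow> real) \<Rightarrow> real) \<Rightarrow> bool" where
  "A1 r k Jh \<longleftrightarrow>
    (\<forall>\<psi>\<in>Pdeg (int r - max 1 (int k)).
       (\<forall>\<phi>\<in>Pdeg (int r - max 1 (int k)).
          Jh (\<lambda>s. (1 - s) ^ (k div 2) * (1 + s) ^ nat \<bar>(int k - 1) div 2\<bar> * poly \<psi> s * poly \<phi> s) = 0)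
       \<longrightarrow> \<psi> = 0)"

end

theory Submission
  imports Defs "Jordan_Normal_Form.Determinant" "HOL-Computational_Algebra.Polynomial_Factorial"
    "HOL-Computational_Algebra.Field_as_Ring"
begin

text \<open>Pulled back to the reference interval [-1,1] by T_n, each component of J_n v is a polynomial Q
of degree at most r singled out by r+1 linear conditions L_\<rho>(Q) = \<beta>_\<rho>(v): values of derivatives at
the endpoints and the moments of Q' against s^m taken with the reference functional (plus the initial
value when k = 0). By (A1) the homogeneous system has only the trivial solution: the vanishing endpoint
derivatives factor Q' as (1-s)^\<lfloor>k/2\<rfloor> (1+s)^\<lfloor>(k-1)/2\<rfloor> \<psi>, and the moment conditions make \<psi>
orthogonal to every test polynomial in the sense of (A1). So the square system is invertible, the
coefficients of Q are a fixed linear combination of the data \<beta>(v), and the data are bounded by sup norms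
of derivatives of v \<circ> T_n by (A2) and (A3). Transporting derivatives between I_n and [-1,1] produces
the factors (\<tau>_n/2)^(j-l).\<close>

section \<open>Square linear systems and polynomials\<close>

lemma injective_square_system_invertible:
  fixes A :: "nat \<Rightarrow> nat \<Rightarrow> real"
  assumes ker: "\<And>x. (\<forall>i<n. (\<Sum>j<n. A i j * x j) = 0) \<Longrightarrow> (\<forall>j<n. x j = 0)"
  shows "\<exists>B. (\<forall>y i. i<n \<longrightarrow> (\<Sum>j<n. A i j * (\<Sum>l<n. B j l * y l)) = y i)
           \<and> (\<forall>y x. (\<forall>i<n. (\<Sum>j<n. A i j * x j) = y i) \<longrightarrow> (\<forall>j<n. x j = (\<Sum>l<n. B j l * y l)))"
proof -
  define M where "M = mat n n (\<lambda>(i,j). A i j)"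
  have M: "M \<in> carrier_mat n n" unfolding M_def by simp
  have mv: "\<And>w. w \<in> carrier_vec n \<Longrightarrow> i < n \<Longrightarrow> (M *\<^sub>v w) $ i = (\<Sum>j<n. A i j * w $ j)" for i
    unfolding M_def by (simp add: mult_mat_vec_def scalar_prod_def lessThan_atLeast0 row_def)
  have "Determinant.det M \<noteq> 0"
  proof
    assume "Determinant.det M = 0"
    then obtain v where v: "v \<in> carrier_vec n" "v \<noteq> 0\<^sub>v n" "M *\<^sub>v v = 0\<^sub>v n"
      using det_0_iff_vec_prod_zero_field[OF M] by auto
    have "\<forall>i<n. (\<Sum>j<n. A i j * v $ j) = 0"
      using v(3) mv[OF v(1)] by (metis index_zero_vec(1))
    then have "\<forall>j<n. v $ j = 0" using ker[of "\<lambda>j. v $ j"] by simp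
    then have "v = 0\<^sub>v n" using v(1) by (intro eq_vecI) auto
    then show False using v(2) by simp
  qed
  then have "M \<in> Units (ring_mat TYPE(real) n ())" by (rule det_non_zero_imp_unit[OF M])
  then obtain N where N: "N \<in> carrier_mat n n" "N * M = 1\<^sub>m n" "M * N = 1\<^sub>m n"
    unfolding Units_def by (auto simp: ring_mat_def)
  define B where "B = (\<lambda>j l. N $$ (j,l))"
  have nv: "\<And>w. w \<in> carrier_vec n \<Longrightarrow> j < n \<Longrightarrow> (N *\<^sub>v w) $ j = (\<Sum>l<n. B j l * w $ l)" for j
    using N(1) unfolding B_def by (simp add: mult_mat_vec_def scalar_prod_def lessThan_atLeast0 row_def)
  show ?thesis
  proof (intro exI conjI allI impI)
    fix y :: "nat \<Rightarrow> real" and i assume i: "i < n"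
    have "M *\<^sub>v (N *\<^sub>v vec n y) = vec n y" using N M by (metis assoc_mult_mat_vec one_mult_mat_vec vec_carrier)
    then show "(\<Sum>j<n. A i j * (\<Sum>l<n. B j l * y l)) = y i"
      using mv[of "N *\<^sub>v vec n y" i] i N(1) nv[of "vec n y"] by simp
  next
    fix y x :: "nat \<Rightarrow> real" and j assume h: "\<forall>i<n. (\<Sum>j<n. A i j * x j) = y i" and j: "j < n"
    have Mx: "M *\<^sub>v vec n x = vec n y"
      by (rule eq_vecI) (use M h mv[of "vec n x"] in auto)
    have "N *\<^sub>v (M *\<^sub>v vec n x) = vec n x" using N M by (metis assoc_mult_mat_vec one_mult_mat_vec vec_carrier)
    then show "x j = (\<Sum>l<n. B j l * y l)" using nv[of "vec n y" j] j Mx by simp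
  qed
qed

lemma higher_pderiv_linear_factor:
  "(pderiv ^^ Suc i) ([:-x,1:] * q)
     = Polynomial.smult (of_nat (Suc i)) ((pderiv ^^ i) q) + [:-x,1:] * (pderiv ^^ Suc i) q"
proof (induction i)
  case 0
  have "(pderiv ^^ Suc 0) ([:-x,1:] * q) = [:-x,1:] * pderiv q + q * pderiv [:-x,1:]"
    using pderiv_mult[of "[:-x,1:]" q] by simp
  then show ?case by (simp add: pderiv_pCons algebra_simps)
next
  case (Suc i)
  have "(pderiv ^^ Suc (Suc i)) ([:-x,1:] * q) = pderiv ((pderiv ^^ Suc i) ([:-x,1:] * q))" by simp
  then show ?case
    unfolding Suc by (simp add: pderiv_add pderiv_smult pderiv_mult pderiv_pCons algebra_simps smult_add_left)
qed

lemma higher_pderivs_vanish_imp_dvd: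
  fixes p :: "real poly"
  shows "(\<forall>i<m. poly ((pderiv ^^ i) p) x = 0) \<Longrightarrow> [:-x,1:]^m dvd p"
proof (induction m arbitrary: p)
  case (Suc m)
  have "poly p x = 0" using Suc.prems[rule_format, of 0] by simp
  then obtain q where q: "p = [:-x,1:] * q" using poly_eq_0_iff_dvd by (metis dvdE)
  have "\<forall>i<m. poly ((pderiv ^^ i) q) x = 0"
  proof (intro allI impI)
    fix i assume "i < m"
    then have "poly ((pderiv ^^ Suc i) p) x = 0" using Suc.prems[rule_format, of "Suc i"] by simp
    then show "poly ((pderiv ^^ i) q) x = 0" unfolding q higher_pderiv_linear_factor by simp
  qed
  then have "[:-x,1:]^m dvd q" using Suc.IH by blast
  then show ?case unfolding q power_Suc by (rule mult_dvd_mono[OF dvd_refl])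
qed simp

lemma endpoint_zeros_imp_dvd:
  fixes p :: "real poly"
  assumes "\<forall>i<A. poly ((pderiv ^^ i) p) 1 = 0" and "\<forall>i<B. poly ((pderiv ^^ i) p) (-1) = 0"
  shows "[:-1,1:]^A * [:1,1:]^B dvd p"
proof -
  have "coprime ([:1,1:] :: real poly) [:-1,1:]"
  proof (rule coprimeI)
    fix c assume "c dvd ([:1,1:] :: real poly)" "c dvd [:-1,1:]"
    then have "c dvd [:2:]" using dvd_diff[of c "[:1,1:]" "[:-1,1:]"] by simp
    moreover have "is_unit ([:2:] :: real poly)" by (subst is_unit_iff_degree) auto
    ultimately show "is_unit c" using dvd_unit_imp_unit by blast
  qed
  then have "coprime ([:-1,1:]^A) ([:1,1:]^B :: real poly)"
    by (auto simp: coprime_power_left_iff coprime_power_right_iff coprime_commute)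
  moreover have "[:-1,1:]^A dvd p" "[:1,1:]^B dvd p"
    using higher_pderivs_vanish_imp_dvd[of A p 1] higher_pderivs_vanish_imp_dvd[of B p "-1"] assms by simp_all
  ultimately show ?thesis by (simp add: divides_mult)
qed

lemma higher_pderiv_monom_bound:
  fixes s c :: real
  assumes s: "\<bar>s\<bar> \<le> 1"
  shows "\<bar>poly ((pderiv ^^ l) (monom c i)) s\<bar> \<le> \<bar>c\<bar> * real i ^ l"
proof (induction l arbitrary: c i)
  case 0
  have "\<bar>s\<bar>^i \<le> 1" using s by (simp add: power_le_one)
  then show ?case by (simp add: poly_monom abs_mult power_abs mult_left_le)
next
  case (Suc l)
  have "(pderiv ^^ Suc l) (monom c i) = (pderiv ^^ l) (monom (of_nat i * c) (i - 1))"
    by (simp add: funpow_Suc_right pderiv_monom del: funpow.simps)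
  then have "\<bar>poly ((pderiv ^^ Suc l) (monom c i)) s\<bar> \<le> \<bar>of_nat i * c\<bar> * real (i - 1) ^ l"
    using Suc.IH[of "of_nat i * c" "i - 1"] by simp
  also have "\<dots> \<le> \<bar>of_nat i * c\<bar> * real i ^ l"
    by (intro mult_left_mono power_mono) auto
  also have "\<dots> = \<bar>c\<bar> * real i ^ Suc l" by (simp add: abs_mult)
  finally show ?case .
qed

lemma higher_pderiv_sum_monom_bound:
  fixes s :: real
  assumes s: "\<bar>s\<bar> \<le> 1"
  shows "\<bar>poly ((pderiv ^^ l) (\<Sum>i\<le>r. monom (c i) i)) s\<bar> \<le> (\<Sum>i\<le>r. \<bar>c i\<bar> * real i ^ l)"
proof -
  have "\<bar>poly ((pderiv ^^ l) (\<Sum>i\<le>r. monom (c i) i)) s\<bar> = \<bar>\<Sum>i\<le>r. poly ((pderiv ^^ l) (monom (c i) i)) s\<bar>"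
    by (simp add: higher_pderiv_sum poly_sum)
  also have "\<dots> \<le> (\<Sum>i\<le>r. \<bar>poly ((pderiv ^^ l) (monom (c i) i)) s\<bar>)" by (rule sum_abs)
  also have "\<dots> \<le> (\<Sum>i\<le>r. \<bar>c i\<bar> * real i ^ l)" by (intro sum_mono higher_pderiv_monom_bound[OF s])
  finally show ?thesis .
qed

lemma coeff_monom_sum: "coeff (\<Sum>i\<le>r. monom (c i) i) j = (if j \<le> r then c j else 0)"
  by (simp add: coeff_sum coeff_monom)

lemma degree_monom_sum: "degree (\<Sum>i\<le>r. monom (c i) i) \<le> r"
  by (intro degree_sum_le) (auto intro: order.trans[OF degree_monom_le])

section \<open>The reference system\<close>

definition nleft :: "nat \<Rightarrow> nat" where
  "nleft k = (if k = 0 then 0 else (k - 1) div 2 + 1)"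

text \<open>Row \<rho> \<le> r of the defining system of J_n, pulled back to [-1,1] and applied to one component Q:
the first nleft k rows are the values Q^(\<rho>)(-1), the next k - nleft k rows the derivatives Q^(i)(1),
1 \<le> i \<le> \<lfloor>k/2\<rfloor>, and the remaining rows test the variational condition against s^(\<rho>-k).\<close>
definition ref_row :: "nat \<Rightarrow> ((real \<Rightarrow> real) \<Rightarrow> real) \<Rightarrow> nat \<Rightarrow> real poly \<Rightarrow> real" where
  "ref_row k Jh \<rho> Q =
    (if \<rho> < nleft k then poly ((pderiv ^^ \<rho>) Q) (-1)
     else if \<rho> < k then poly ((pderiv ^^ (\<rho> - nleft k + 1)) Q) 1
     else Jh (\<lambda>s. s ^ (\<rho> - k) * poly (pderiv Q) s) + (if k = 0 then poly Q (-1) * (-1) ^ (\<rho> - k) else 0))"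

lemma nleft_le: "nleft k \<le> k"
  unfolding nleft_def by auto

lemma ref_row_moment:
  "ref_row k Jh (k + m) Q = Jh (\<lambda>s. s ^ m * poly (pderiv Q) s) + (if k = 0 then poly Q (-1) * (-1) ^ m else 0)"
  using nleft_le[of k] unfolding ref_row_def by auto

definition linear_on_polys :: "((real \<Rightarrow> real) \<Rightarrow> real) \<Rightarrow> bool" where
  "linear_on_polys Jh \<longleftrightarrow>
     (\<forall>P Q \<alpha> \<beta>. Jh (\<lambda>s. \<alpha> * poly P s + \<beta> * poly Q s) = \<alpha> * Jh (poly P) + \<beta> * Jh (poly Q))"

lemma linear_on_polys_zero: "linear_on_polys Jh \<Longrightarrow> Jh (\<lambda>s. 0) = 0"
  unfolding linear_on_polys_def by (drule spec[of _ 0], drule spec[of _ 0], drule spec[of _ 0], drule spec[of _ 0]) simp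

lemma linear_on_polys_sum:
  assumes L: "linear_on_polys Jh" and F: "finite F"
  shows "Jh (\<lambda>s. \<Sum>m\<in>F. c m * poly (P m) s) = (\<Sum>m\<in>F. c m * Jh (poly (P m)))"
  using F
proof (induction F rule: finite_induct)
  case empty
  then show ?case using linear_on_polys_zero[OF L] by simp
next
  case (insert x F)
  define R where "R = (\<Sum>m\<in>F. Polynomial.smult (c m) (P m))"
  have pR: "poly R = (\<lambda>s. \<Sum>m\<in>F. c m * poly (P m) s)" unfolding R_def by (auto simp: poly_sum)
  have "Jh (\<lambda>s. c x * poly (P x) s + 1 * poly R s) = c x * Jh (poly (P x)) + 1 * Jh (poly R)"
    using L unfolding linear_on_polys_def by blast
  then show ?case using insert pR by simp
qed

lemma linear_on_polys_mult:
  assumes L: "linear_on_polys Jh" and d: "degree \<phi> \<le> n"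
  shows "Jh (\<lambda>s. poly Q s * poly \<phi> s) = (\<Sum>m\<le>n. coeff \<phi> m * Jh (\<lambda>s. s ^ m * poly Q s))"
proof -
  have "poly Q s * poly \<phi> s = (\<Sum>m\<le>n. coeff \<phi> m * poly (monom 1 m * Q) s)" for s
    by (subst poly_as_sum_of_monoms'[OF d, symmetric])
       (simp add: poly_sum poly_monom sum_distrib_left algebra_simps)
  moreover have "poly (monom 1 m * Q) = (\<lambda>s. s ^ m * poly Q s)" for m by (auto simp: poly_monom)
  ultimately show ?thesis using linear_on_polys_sum[OF L, of "{..n}" "coeff \<phi>" "\<lambda>m. monom 1 m * Q"] by simp
qed

lemma ref_row_linear:
  assumes L: "linear_on_polys Jh"
  shows "ref_row k Jh \<rho> (Polynomial.smult \<alpha> P + Polynomial.smult \<beta> Q)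
       = \<alpha> * ref_row k Jh \<rho> P + \<beta> * ref_row k Jh \<rho> Q"
proof -
  have J: "Jh (\<lambda>s. s ^ m * poly (pderiv (Polynomial.smult \<alpha> P + Polynomial.smult \<beta> Q)) s)
     = \<alpha> * Jh (\<lambda>s. s ^ m * poly (pderiv P) s) + \<beta> * Jh (\<lambda>s. s ^ m * poly (pderiv Q) s)" for m
  proof -
    have "(\<lambda>s. s ^ m * poly (pderiv (Polynomial.smult \<alpha> P + Polynomial.smult \<beta> Q)) s)
       = (\<lambda>s. \<alpha> * poly (monom 1 m * pderiv P) s + \<beta> * poly (monom 1 m * pderiv Q) s)"
      by (auto simp: pderiv_add pderiv_smult poly_monom algebra_simps)
    moreover have "poly (monom 1 m * R) = (\<lambda>s. s ^ m * poly R s)" for R :: "real poly"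
      by (auto simp: poly_monom)
    ultimately show ?thesis using L unfolding linear_on_polys_def by metis
  qed
  consider "\<rho> < nleft k" | "nleft k \<le> \<rho>" "\<rho> < k" | m where "\<rho> = k + m"
    using le_Suc_ex by force
  then show ?thesis
  proof cases
    case 3
    then show ?thesis unfolding 3 ref_row_moment J by (simp add: algebra_simps)
  qed (auto simp: ref_row_def higher_pderiv_add higher_pderiv_smult pderiv_add pderiv_smult)
qed

lemma ref_row_sum:
  assumes L: "linear_on_polys Jh" and F: "finite F"
  shows "ref_row k Jh \<rho> (\<Sum>i\<in>F. Polynomial.smult (c i) (P i)) = (\<Sum>i\<in>F. c i * ref_row k Jh \<rho> (P i))"
  using F
proof (induction F rule: finite_induct)
  case empty
  show ?case using ref_row_linear[OF L, of k \<rho> 0 0 0 0] by simp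
next
  case (insert x F)
  then show ?case using ref_row_linear[OF L, of k \<rho> "c x" "P x" 1] by simp
qed

lemma ref_rows_zero_imp_moments_zero:
  assumes L: "linear_on_polys Jh" and kr: "k \<le> r" and rows: "\<forall>\<rho>\<le>r. ref_row k Jh \<rho> Q = 0"
    and d: "degree \<phi> \<le> r - k"
  shows "Jh (\<lambda>s. poly (pderiv Q) s * poly \<phi> s) + (if k = 0 then poly Q (-1) * poly \<phi> (-1) else 0) = 0"
proof -
  have row: "Jh (\<lambda>s. s ^ m * poly (pderiv Q) s) + (if k = 0 then poly Q (-1) * (-1) ^ m else 0) = 0"
    if "m \<le> r - k" for m
    using rows that kr ref_row_moment[of k Jh m Q] by auto
  have "poly \<phi> (-1) = (\<Sum>m\<le>r-k. coeff \<phi> m * (-1) ^ m)"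
    by (subst poly_as_sum_of_monoms'[OF d, symmetric]) (simp add: poly_sum poly_monom)
  then have "Jh (\<lambda>s. poly (pderiv Q) s * poly \<phi> s) + (if k = 0 then poly Q (-1) * poly \<phi> (-1) else 0)
     = (\<Sum>m\<le>r-k. coeff \<phi> m * (Jh (\<lambda>s. s ^ m * poly (pderiv Q) s)
                                 + (if k = 0 then poly Q (-1) * (-1) ^ m else 0)))"
    unfolding linear_on_polys_mult[OF L d] by (simp add: sum_distrib_left algebra_simps sum.distrib)
  also have "\<dots> = 0" using row by simp
  finally show ?thesis .
qed

text \<open>For k = 0 the weight in (A1) is 1 + s, since \<lfloor>-1/2\<rfloor> = -1; it is moved onto the test polynomial.\<close>
lemma ref_rows_zero_imp_pderiv_zero_k0:
  assumes A1: "A1 r 0 Jh" and L: "linear_on_polys Jh" and dQ: "degree Q \<le> r"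
    and rows: "\<forall>\<rho>\<le>r. ref_row 0 Jh \<rho> Q = 0"
  shows "pderiv Q = 0"
proof -
  have "pderiv Q \<in> Pdeg (int r - 1)"
    using dQ degree_pderiv[of Q] pderiv_eq_0_iff[of Q] unfolding Pdeg_def by fastforce
  moreover have "Jh (\<lambda>s. (1 + s) * poly (pderiv Q) s * poly \<phi> s) = 0" if "\<phi> \<in> Pdeg (int r - 1)" for \<phi>
  proof -
    have "degree ([:1,1:] * \<phi>) \<le> r"
    proof (cases "\<phi> = 0")
      case False
      then show ?thesis using degree_mult_le[of "[:1,1:]" \<phi>] that by (auto simp: Pdeg_def simp del: mult_pCons_left)
    qed simp
    from ref_rows_zero_imp_moments_zero[OF L _ rows, simplified, OF this] show ?thesis
      by (simp add: algebra_simps)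
  qed
  ultimately show ?thesis using A1 unfolding A1_def by simp
qed

lemma ref_rows_zero_imp_pderiv_zero:
  assumes kr: "k \<le> r" and k: "k \<noteq> 0" and A1: "A1 r k Jh" and L: "linear_on_polys Jh"
    and dQ: "degree Q \<le> r" and rows: "\<forall>\<rho>\<le>r. ref_row k Jh \<rho> Q = 0"
  shows "pderiv Q = 0"
proof -
  define A where "A = k div 2"
  define B where "B = (k - 1) div 2"
  have AB: "A + B = k - 1" and nleft: "nleft k = B + 1" and B: "nat \<bar>(int k - 1) div 2\<bar> = B"
    unfolding A_def B_def nleft_def using k by (auto simp: zdiv_int)
  have "poly ((pderiv ^^ i) (pderiv Q)) 1 = 0" if "i < A" for i
  proof -
    have "ref_row k Jh (B + 1 + i) Q = 0" using rows that kr AB by auto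
    moreover have "B + 1 + i < k" using that AB by linarith
    ultimately show ?thesis using nleft by (simp add: ref_row_def funpow_Suc_right del: funpow.simps)
  qed
  moreover have "poly ((pderiv ^^ i) (pderiv Q)) (-1) = 0" if "i < B" for i
  proof -
    have "ref_row k Jh (Suc i) Q = 0" using rows that kr AB by auto
    then show ?thesis using that nleft by (simp add: ref_row_def funpow_Suc_right del: funpow.simps)
  qed
  ultimately obtain \<psi>0 where \<psi>0: "pderiv Q = [:-1,1:]^A * [:1,1:]^B * \<psi>0"
    using endpoint_zeros_imp_dvd by (metis dvdE)
  define \<psi> where "\<psi> = Polynomial.smult ((-1)^A) \<psi>0"
  have pQ: "poly (pderiv Q) s = (1 - s)^A * (1 + s)^B * poly \<psi> s" for s
  proof -
    have "(s - 1)^A = (-1)^A * (1 - s)^A" by (metis minus_diff_eq power_minus)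
    then show ?thesis using \<psi>0 by (simp add: \<psi>_def poly_power algebra_simps)
  qed
  have "\<psi> \<in> Pdeg (int r - max 1 (int k))"
  proof (cases "\<psi> = 0")
    case False
    then have "degree (pderiv Q) = A + B + degree \<psi>0"
      using \<psi>0 by (simp add: \<psi>_def degree_mult_eq degree_linear_power)
    then show ?thesis using dQ degree_pderiv[of Q] AB False kr k by (auto simp: Pdeg_def \<psi>_def)
  qed (simp add: Pdeg_def)
  moreover have "Jh (\<lambda>s. (1 - s) ^ A * (1 + s) ^ B * poly \<psi> s * poly \<phi> s) = 0"
    if "\<phi> \<in> Pdeg (int r - max 1 (int k))" for \<phi>
  proof -
    have "degree \<phi> \<le> r - k" using that k kr unfolding Pdeg_def by auto
    then show ?thesis using ref_rows_zero_imp_moments_zero[OF L kr rows] k by (simp add: pQ)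
  qed
  ultimately have "\<psi> = 0" using A1 unfolding A1_def A_def[symmetric] B by blast
  then show ?thesis using \<psi>0 by (simp add: \<psi>_def)
qed

lemma ref_rows_injective:
  assumes kr: "k \<le> r" and A1: "A1 r k Jh" and L: "linear_on_polys Jh" and dQ: "degree Q \<le> r"
    and rows: "\<forall>\<rho>\<le>r. ref_row k Jh \<rho> Q = 0"
  shows "Q = 0"
proof -
  have "pderiv Q = 0"
    using ref_rows_zero_imp_pderiv_zero_k0[of r Jh Q] ref_rows_zero_imp_pderiv_zero[OF kr _ A1 L dQ rows] A1 L dQ rows
    by (cases "k = 0") auto
  then obtain c where c: "Q = [:c:]" by (meson degree_eq_zeroE pderiv_eq_0_iff)
  have "ref_row k Jh 0 Q = 0" using rows by simp
  then show ?thesis using linear_on_polys_zero[OF L] c by (cases "k = 0") (auto simp: ref_row_def nleft_def)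
qed

lemma ref_system_invertible:
  assumes kr: "k \<le> r" and A1: "A1 r k Jh" and L: "linear_on_polys Jh"
  shows "\<exists>B. \<forall>y. (\<forall>\<rho>\<le>r. ref_row k Jh \<rho> (\<Sum>i\<le>r. monom (\<Sum>l\<le>r. B i l * y l) i) = y \<rho>)
          \<and> (\<forall>Q. degree Q \<le> r \<and> (\<forall>\<rho>\<le>r. ref_row k Jh \<rho> Q = y \<rho>)
                 \<longrightarrow> (\<forall>i\<le>r. coeff Q i = (\<Sum>l\<le>r. B i l * y l)))"
proof -
  define A where "A = (\<lambda>\<rho> i. ref_row k Jh \<rho> (monom 1 i))"
  have Lx: "ref_row k Jh \<rho> (\<Sum>i\<le>r. monom (x i) i) = (\<Sum>i\<le>r. A \<rho> i * x i)" for \<rho> and x :: "nat \<Rightarrow> real"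
    using ref_row_sum[OF L, of "{..r}" k \<rho> x "\<lambda>i. monom 1 i"] unfolding A_def
    by (simp add: smult_monom mult.commute)
  have "\<exists>B. (\<forall>y i. i<Suc r \<longrightarrow> (\<Sum>j<Suc r. A i j * (\<Sum>l<Suc r. B j l * y l)) = y i)
           \<and> (\<forall>y x. (\<forall>i<Suc r. (\<Sum>j<Suc r. A i j * x j) = y i)
                     \<longrightarrow> (\<forall>j<Suc r. x j = (\<Sum>l<Suc r. B j l * y l)))"
  proof (rule injective_square_system_invertible)
    fix x :: "nat \<Rightarrow> real" assume h: "\<forall>i<Suc r. (\<Sum>j<Suc r. A i j * x j) = 0"
    define Q where "Q = (\<Sum>i\<le>r. monom (x i) i)"
    have "degree Q \<le> r" unfolding Q_def by (intro degree_sum_le) (auto intro: order.trans[OF degree_monom_le])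
    moreover have "\<forall>\<rho>\<le>r. ref_row k Jh \<rho> Q = 0" using h unfolding Q_def Lx by (simp add: lessThan_Suc_atMost)
    ultimately have "Q = 0" using ref_rows_injective[OF kr A1 L] by blast
    moreover have "coeff Q j = x j" if "j < Suc r" for j
      using that unfolding Q_def by (simp add: coeff_sum coeff_monom)
    ultimately show "\<forall>j<Suc r. x j = 0" by simp
  qed
  then obtain B where B1: "\<And>y i. i \<le> r \<Longrightarrow> (\<Sum>j\<le>r. A i j * (\<Sum>l\<le>r. B j l * y l)) = y i"
    and B2: "\<And>y x. (\<forall>i\<le>r. (\<Sum>j\<le>r. A i j * x j) = y i) \<Longrightarrow> (\<forall>j\<le>r. x j = (\<Sum>l\<le>r. B j l * y l))"
    unfolding lessThan_Suc_atMost less_Suc_eq_le by blast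
  show ?thesis
  proof (intro exI allI conjI impI)
    fix y \<rho> assume "\<rho> \<le> r"
    then show "ref_row k Jh \<rho> (\<Sum>i\<le>r. monom (\<Sum>l\<le>r. B i l * y l) i) = y \<rho>" unfolding Lx using B1 by simp
  next
    fix y Q i assume h: "degree Q \<le> r \<and> (\<forall>\<rho>\<le>r. ref_row k Jh \<rho> Q = y \<rho>)" and i: "i \<le> r"
    then have "Q = (\<Sum>i\<le>r. monom (coeff Q i) i)" using poly_as_sum_of_monoms' by metis
    then have "\<forall>\<rho>\<le>r. (\<Sum>j\<le>r. A \<rho> j * coeff Q j) = y \<rho>" using h Lx[of _ "coeff Q"] by metis
    then show "coeff Q i = (\<Sum>l\<le>r. B i l * y l)" using B2 i by blast
  qed
qed

section \<open>Smooth functions on compact intervals\<close>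

lemma vector_derivative_within_cong:
  assumes "\<forall>y\<in>S. F y = G y" "x \<in> S"
  shows "vector_derivative F (at x within S) = vector_derivative G (at x within S)"
proof -
  have "(F has_vector_derivative f') (at x within S) \<longleftrightarrow> (G has_vector_derivative f') (at x within S)" for f'
    using assms has_vector_derivative_transform[of x S] by metis
  then show ?thesis unfolding vector_derivative_def by simp
qed

lemma nderiv_cong:
  assumes "\<forall>y\<in>S. f y = g y" "x \<in> S"
  shows "nderiv S j f x = nderiv S j g x"
  using assms(2)
proof (induction j arbitrary: x)
  case 0
  then show ?case using assms(1) by simp
next
  case (Suc j)
  then show ?case by (simp add: vector_derivative_within_cong)
qed

lemma Ck_on_cong:
  assumes "\<forall>y\<in>S. f y = g y" "Ck_on k S f"
  shows "Ck_on k S g"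
  unfolding Ck_on_def
proof (intro conjI ballI allI impI)
  fix j x assume "j < k" "x \<in> S"
  then have "(nderiv S j f has_vector_derivative nderiv S (Suc j) f x) (at x within S)"
    using assms(2) unfolding Ck_on_def by blast
  then have "(nderiv S j g has_vector_derivative nderiv S (Suc j) f x) (at x within S)"
    using has_vector_derivative_transform[of x S "nderiv S j g" "nderiv S j f"] nderiv_cong[OF assms(1)] \<open>x\<in>S\<close>
    by metis
  then show "(nderiv S j g has_vector_derivative nderiv S (Suc j) g x) (at x within S)"
    using nderiv_cong[OF assms(1) \<open>x\<in>S\<close>] by metis
next
  fix j assume "j \<le> k"
  then have "continuous_on S (nderiv S j f)" using assms(2) unfolding Ck_on_def by blast
  then show "continuous_on S (nderiv S j g)"
    using continuous_on_cong[of S S "nderiv S j f" "nderiv S j g"] nderiv_cong[OF assms(1)] by metis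
qed

lemma Ck_on_mono: "m \<le> n \<Longrightarrow> Ck_on n S f \<Longrightarrow> Ck_on m S f"
  unfolding Ck_on_def by auto

lemma nderiv_nderiv_1: "nderiv S j (nderiv S 1 f) = nderiv S (Suc j) f"
  by (induction j) auto

lemma Ck_on_nderiv_1: "Ck_on (Suc n) S f \<Longrightarrow> Ck_on n S (nderiv S 1 f)"
  unfolding Ck_on_def nderiv_nderiv_1 by auto

lemma nderiv_eqI:
  fixes F :: "nat \<Rightarrow> real \<Rightarrow> 'a::euclidean_space"
  assumes cd: "c < d"
    and F0: "\<forall>x\<in>{c..d}. f x = F 0 x"
    and FD: "\<And>j x. j < n \<Longrightarrow> x \<in> {c..d} \<Longrightarrow> (F j has_vector_derivative F (Suc j) x) (at x within {c..d})"
  shows "j \<le> n \<Longrightarrow> x \<in> {c..d} \<Longrightarrow> nderiv {c..d} j f x = F j x"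
proof (induction j arbitrary: x)
  case 0
  then show ?case using F0 by simp
next
  case (Suc j)
  have "nderiv {c..d} (Suc j) f x = vector_derivative (nderiv {c..d} j f) (at x within {c..d})" by simp
  also have "\<dots> = vector_derivative (F j) (at x within {c..d})"
    using Suc by (intro vector_derivative_within_cong) auto
  also have "\<dots> = F (Suc j) x"
    using FD[of j x] Suc.prems cd by (intro vector_derivative_within_closed_interval) auto
  finally show ?case .
qed

lemma Ck_onI:
  fixes F :: "nat \<Rightarrow> real \<Rightarrow> 'a::euclidean_space"
  assumes cd: "c < d"
    and F0: "\<forall>x\<in>{c..d}. f x = F 0 x"
    and FD: "\<And>j x. j < n \<Longrightarrow> x \<in> {c..d} \<Longrightarrow> (F j has_vector_derivative F (Suc j) x) (at x within {c..d})"
    and FC: "\<And>j. j \<le> n \<Longrightarrow> continuous_on {c..d} (F j)"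
  shows "Ck_on n {c..d} f"
proof -
  have e: "j \<le> n \<Longrightarrow> x \<in> {c..d} \<Longrightarrow> nderiv {c..d} j f x = F j x" for j x
    using nderiv_eqI[OF cd F0 FD] by blast
  show ?thesis unfolding Ck_on_def
  proof (intro conjI ballI allI impI)
    fix j x assume j: "j < n" and x: "x \<in> {c..d}"
    have "(F j has_vector_derivative F (Suc j) x) (at x within {c..d})" using FD j x by blast
    then have "(nderiv {c..d} j f has_vector_derivative F (Suc j) x) (at x within {c..d})"
      using has_vector_derivative_transform[of x "{c..d}" "nderiv {c..d} j f" "F j"] e j x by auto
    then show "(nderiv {c..d} j f has_vector_derivative nderiv {c..d} (Suc j) f x) (at x within {c..d})"
      using e[of "Suc j" x] j x by simp
  next
    fix j assume j: "j \<le> n"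
    show "continuous_on {c..d} (nderiv {c..d} j f)"
      using continuous_on_cong[of "{c..d}" "{c..d}" "F j" "nderiv {c..d} j f"] FC[OF j] e[OF j] by metis
  qed
qed

lemma Ck_on_has_vector_derivative:
  assumes "Ck_on n S f" "j < n" "x \<in> S"
  shows "(nderiv S j f has_vector_derivative nderiv S (Suc j) f x) (at x within S)"
  using assms unfolding Ck_on_def by blast

lemma Ck_on_continuous:
  assumes "Ck_on n S f" "j \<le> n"
  shows "continuous_on S (nderiv S j f)"
  using assms unfolding Ck_on_def by blast

lemma poly_has_vector_derivative: "(poly P has_vector_derivative poly (pderiv P) x) (at x within S)"
  using poly_DERIV[of P x] unfolding has_real_derivative_iff_has_vector_derivative
  by (rule has_vector_derivative_at_within)

lemma nderiv_poly:
  assumes cd: "c < d" and x: "x \<in> {c..d}"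
  shows "nderiv {c..d} j (poly P) x = poly ((pderiv ^^ j) P) x"
  using nderiv_eqI[of c d "poly P" "\<lambda>j. poly ((pderiv ^^ j) P)" "Suc j" j x] cd x poly_has_vector_derivative by auto

lemma Ck_on_poly:
  assumes cd: "c < d"
  shows "Ck_on n {c..d} (poly P)"
  by (rule Ck_onI[of c d _ "\<lambda>j. poly ((pderiv ^^ j) P)"]) (use cd poly_has_vector_derivative in \<open>auto intro: continuous_intros\<close>)

lemma Ck_on_lincomb:
  fixes g :: "'i \<Rightarrow> real \<Rightarrow> real" and cv :: "'i \<Rightarrow> 'a::euclidean_space"
  assumes cd: "c < d" and I: "finite I" and g: "\<And>i. i \<in> I \<Longrightarrow> Ck_on n {c..d} (g i)"
  shows "Ck_on n {c..d} (\<lambda>x. \<Sum>i\<in>I. g i x *\<^sub>R cv i)"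
    and "j \<le> n \<Longrightarrow> x \<in> {c..d} \<Longrightarrow> nderiv {c..d} j (\<lambda>x. \<Sum>i\<in>I. g i x *\<^sub>R cv i) x = (\<Sum>i\<in>I. nderiv {c..d} j (g i) x *\<^sub>R cv i)"
proof -
  define F where "F = (\<lambda>j x. \<Sum>i\<in>I. nderiv {c..d} j (g i) x *\<^sub>R cv i)"
  have FD: "(F j has_vector_derivative F (Suc j) x) (at x within {c..d})" if "j < n" "x \<in> {c..d}" for j x
    unfolding F_def
    by (intro has_vector_derivative_sum bounded_linear.has_vector_derivative[OF bounded_linear_scaleR_left] Ck_on_has_vector_derivative[OF g]) (use that in auto)
  have FC: "continuous_on {c..d} (F j)" if "j \<le> n" for j
    unfolding F_def by (intro continuous_intros Ck_on_continuous[OF g]) (use that in auto)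
  show "Ck_on n {c..d} (\<lambda>x. \<Sum>i\<in>I. g i x *\<^sub>R cv i)"
    by (rule Ck_onI[where F=F, OF cd _ FD FC]) (auto simp: F_def)
  show "j \<le> n \<Longrightarrow> x \<in> {c..d} \<Longrightarrow> nderiv {c..d} j (\<lambda>x. \<Sum>i\<in>I. g i x *\<^sub>R cv i) x = (\<Sum>i\<in>I. nderiv {c..d} j (g i) x *\<^sub>R cv i)"
    using nderiv_eqI[where F=F, OF cd _ FD, of "\<lambda>x. \<Sum>i\<in>I. g i x *\<^sub>R cv i"] by (auto simp: F_def)
qed

lemma Ck_on_inner:
  fixes f :: "real \<Rightarrow> 'a::euclidean_space"
  assumes cd: "c < d" and f: "Ck_on n {c..d} f"
  shows "Ck_on n {c..d} (\<lambda>x. f x \<bullet> u)"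
    and "j \<le> n \<Longrightarrow> x \<in> {c..d} \<Longrightarrow> nderiv {c..d} j (\<lambda>x. f x \<bullet> u) x = nderiv {c..d} j f x \<bullet> u"
proof -
  define F where "F = (\<lambda>j x. nderiv {c..d} j f x \<bullet> u)"
  have FD: "(F j has_vector_derivative F (Suc j) x) (at x within {c..d})" if "j < n" "x \<in> {c..d}" for j x
    unfolding F_def
    by (intro bounded_linear.has_vector_derivative[OF bounded_linear_inner_left] Ck_on_has_vector_derivative[OF f]) (use that in auto)
  have FC: "continuous_on {c..d} (F j)" if "j \<le> n" for j
    unfolding F_def by (intro continuous_intros Ck_on_continuous[OF f]) (use that in auto)
  show "Ck_on n {c..d} (\<lambda>x. f x \<bullet> u)"
    by (rule Ck_onI[where F=F, OF cd _ FD FC]) (auto simp: F_def)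
  show "j \<le> n \<Longrightarrow> x \<in> {c..d} \<Longrightarrow> nderiv {c..d} j (\<lambda>x. f x \<bullet> u) x = nderiv {c..d} j f x \<bullet> u"
    using nderiv_eqI[where F=F, OF cd _ FD, of "\<lambda>x. f x \<bullet> u"] by (auto simp: F_def)
qed

lemma Tmap_image:
  assumes ab: "a < b"
  shows "Tmap a b ` {-1..1} = {a..b}"
proof
  show "Tmap a b ` {-1..1} \<subseteq> {a..b}"
  proof
    fix y assume "y \<in> Tmap a b ` {-1..1}"
    then obtain s where s: "s \<in> {-1..1}" "y = Tmap a b s" by auto
    have "(b - a) / 2 * s \<le> (b - a) / 2 * 1" by (rule mult_left_mono) (use s ab in auto)
    moreover have "(b - a) / 2 * (-1) \<le> (b - a) / 2 * s" by (rule mult_left_mono) (use s ab in auto)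
    ultimately have "a \<le> y \<and> y \<le> b" using s(2) unfolding Tmap_def by (simp add: field_simps)
    then show "y \<in> {a..b}" by auto
  qed
next
  show "{a..b} \<subseteq> Tmap a b ` {-1..1}"
  proof
    fix y assume y: "y \<in> {a..b}"
    have "Tinv a b y \<in> {-1..1}" "Tmap a b (Tinv a b y) = y"
      using y ab unfolding Tinv_def Tmap_def by (auto simp: field_simps)
    then show "y \<in> Tmap a b ` {-1..1}" by (metis imageI)
  qed
qed

lemma Tmap_Tinv: "a < b \<Longrightarrow> Tmap a b (Tinv a b y) = y"
  unfolding Tinv_def Tmap_def by (auto simp: field_simps)

lemma Tinv_Tmap: "a < b \<Longrightarrow> Tinv a b (Tmap a b s) = s"
  unfolding Tinv_def Tmap_def by (auto simp: field_simps)

lemma Tmap_has_vector_derivative: "(Tmap a b has_vector_derivative (b - a) / 2) (at s within S)"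
proof -
  have "((\<lambda>s. (a + b) / 2 + (b - a) / 2 * s) has_real_derivative (b - a) / 2) (at s within S)"
    by (auto intro!: derivative_eq_intros)
  then show ?thesis unfolding Tmap_def[abs_def] has_real_derivative_iff_has_vector_derivative .
qed

lemma Ck_on_Tmap_comp:
  fixes f :: "real \<Rightarrow> 'a::euclidean_space"
  assumes ab: "a < b" and f: "Ck_on n {a..b} f"
  shows "Ck_on n {-1..1} (\<lambda>s. f (Tmap a b s))"
    and "j \<le> n \<Longrightarrow> s \<in> {-1..1} \<Longrightarrow> nderiv {-1..1} j (\<lambda>s. f (Tmap a b s)) s = ((b - a) / 2)^j *\<^sub>R nderiv {a..b} j f (Tmap a b s)"
proof -
  define h where "h = (b - a) / 2"
  define F where "F = (\<lambda>j s. h^j *\<^sub>R nderiv {a..b} j f (Tmap a b s))"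
  have TI: "Tmap a b ` {-1..1} = {a..b}" by (rule Tmap_image[OF ab])
  have FD: "(F j has_vector_derivative F (Suc j) x) (at x within {-1..1})" if "j < n" "x \<in> {-1..1}" for j x
  proof -
    have T: "Tmap a b x \<in> {a..b}" using TI that by auto
    have "(nderiv {a..b} j f \<circ> Tmap a b has_vector_derivative h *\<^sub>R nderiv {a..b} (Suc j) f (Tmap a b x)) (at x within {-1..1})"
      unfolding h_def
      by (rule vector_diff_chain_within[OF Tmap_has_vector_derivative]) (use Ck_on_has_vector_derivative[OF f \<open>j<n\<close> T] TI in auto)
    then have "((\<lambda>s. h^j *\<^sub>R (nderiv {a..b} j f \<circ> Tmap a b) s) has_vector_derivative h^j *\<^sub>R (h *\<^sub>R nderiv {a..b} (Suc j) f (Tmap a b x))) (at x within {-1..1})"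
      by (rule bounded_linear.has_vector_derivative[OF bounded_linear_scaleR_right])
    then show ?thesis unfolding F_def by (simp add: o_def mult.commute)
  qed
  have FC: "continuous_on {-1..1} (F j)" if "j \<le> n" for j
  proof -
    have "continuous_on {-1..1} (\<lambda>s. nderiv {a..b} j f (Tmap a b s))"
    proof (rule continuous_on_compose2[OF Ck_on_continuous[OF f that]])
      show "continuous_on {-1..1} (Tmap a b)" unfolding Tmap_def[abs_def] by (intro continuous_intros)
    qed (use TI in auto)
    then show ?thesis unfolding F_def by (intro continuous_intros)
  qed
  show "Ck_on n {-1..1} (\<lambda>s. f (Tmap a b s))"
    by (rule Ck_onI[where F=F, OF _ _ FD FC]) (auto simp: F_def)
  show "j \<le> n \<Longrightarrow> s \<in> {-1..1} \<Longrightarrow> nderiv {-1..1} j (\<lambda>s. f (Tmap a b s)) s = ((b - a) / 2)^j *\<^sub>R nderiv {a..b} j f (Tmap a b s)"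
    using nderiv_eqI[where F=F, OF _ _ FD, of "\<lambda>s. f (Tmap a b s)"] by (auto simp: F_def h_def)
qed

lemma Ck_on_times_id:
  fixes g :: "real \<Rightarrow> real"
  assumes cd: "c < d" and g: "Ck_on n {c..d} g"
  shows "Ck_on n {c..d} (\<lambda>x. x * g x)"
    and "j \<le> n \<Longrightarrow> x \<in> {c..d} \<Longrightarrow> nderiv {c..d} j (\<lambda>x. x * g x) x = x * nderiv {c..d} j g x + of_nat j * nderiv {c..d} (j - 1) g x"
proof -
  define G where "G = (\<lambda>j. nderiv {c..d} j g)"
  define F where "F = (\<lambda>j x. x * G j x + of_nat j * G (j - 1) x)"
  have FD: "(F j has_vector_derivative F (Suc j) x) (at x within {c..d})" if "j < n" "x \<in> {c..d}" for j x
  proof -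
    have d1: "(G j has_vector_derivative G (Suc j) x) (at x within {c..d})" using Ck_on_has_vector_derivative[OF g that] by (simp add: G_def)
    have d2: "(G (j-1) has_vector_derivative G (Suc (j-1)) x) (at x within {c..d})" using Ck_on_has_vector_derivative[OF g _ that(2), of "j-1"] that by (simp add: G_def)
    have "(F j has_vector_derivative
         (x * G (Suc j) x + 1 * G j x) + of_nat j * G (Suc (j-1)) x) (at x within {c..d})"
      unfolding F_def by (intro has_vector_derivative_add has_vector_derivative_mult has_vector_derivative_mult_right d1 d2 has_vector_derivative_id)
    moreover have eq: "(x * G (Suc j) x + 1 * G j x) + of_nat j * G (Suc (j-1)) x = F (Suc j) x"
      by (cases j) (auto simp: F_def algebra_simps)
    ultimately show ?thesis by (simp only: eq)
  qed
  have FC: "continuous_on {c..d} (F j)" if "j \<le> n" for j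
    unfolding F_def G_def by (intro continuous_intros Ck_on_continuous[OF g]) (use that in auto)
  show "Ck_on n {c..d} (\<lambda>x. x * g x)"
    by (rule Ck_onI[where F=F, OF cd _ FD FC]) (auto simp: F_def G_def)
  show "j \<le> n \<Longrightarrow> x \<in> {c..d} \<Longrightarrow> nderiv {c..d} j (\<lambda>x. x * g x) x = x * nderiv {c..d} j g x + of_nat j * nderiv {c..d} (j - 1) g x"
    using nderiv_eqI[where F=F, OF cd _ FD, of "\<lambda>x. x * g x"] by (auto simp: F_def G_def)
qed

lemma bdd_above_norm_image:
  assumes "continuous_on T g" "compact T" "S \<subseteq> T"
  shows "bdd_above ((\<lambda>x. norm (g x)) ` S)"
proof -
  have "compact ((\<lambda>x. norm (g x)) ` T)"
    by (rule compact_continuous_image) (use assms in \<open>auto intro: continuous_intros\<close>)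
  then have "bdd_above ((\<lambda>x. norm (g x)) ` T)" by (meson bounded_imp_bdd_above compact_imp_bounded)
  then show ?thesis using assms(3) by (meson bdd_above_mono image_mono)
qed

lemma supn_upper:
  assumes "continuous_on T g" "compact T" "S \<subseteq> T" "x \<in> S"
  shows "norm (g x) \<le> supn S g"
  unfolding supn_def using cSUP_upper[of x S "\<lambda>x. norm (g x)"] bdd_above_norm_image[OF assms(1-3)] assms(4) by simp

lemma supn_le:
  assumes "S \<noteq> {}" "\<And>x. x \<in> S \<Longrightarrow> norm (g x) \<le> K"
  shows "supn S g \<le> K"
  unfolding supn_def using assms by (intro cSUP_least) auto

lemma supn_nonneg:
  assumes "continuous_on T g" "compact T" "S \<subseteq> T" "S \<noteq> {}"
  shows "0 \<le> supn S g"
proof -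
  obtain x where "x \<in> S" using assms(4) by auto
  then show ?thesis using supn_upper[OF assms(1-3)] norm_ge_zero order.trans by blast
qed

lemma supn_cong:
  assumes "\<And>x. x \<in> S \<Longrightarrow> norm (f x) = norm (g x)"
  shows "supn S f = supn S g"
  unfolding supn_def using assms by (intro SUP_cong) auto

lemma supn_zero: "S \<noteq> {} \<Longrightarrow> (\<And>x. x \<in> S \<Longrightarrow> f x = 0) \<Longrightarrow> supn S f = 0"
  unfolding supn_def by (subst SUP_cong[of S S _ "\<lambda>x. 0"]) auto

lemma Ck_on_zero: assumes "c < d" shows "Ck_on n {c..d} (\<lambda>x. 0::real)"
proof -
  have "poly 0 = (\<lambda>x::real. 0)" by auto
  then show ?thesis using Ck_on_poly[of c d n 0] assms by metis
qed

lemma nderiv_zero_on: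
  assumes "c < d" "\<forall>y\<in>{c..d}. f y = (0::real)" "x \<in> {c..d}"
  shows "nderiv {c..d} j f x = 0"
proof -
  have "nderiv {c..d} j f x = nderiv {c..d} j (poly 0) x" using nderiv_cong[of "{c..d}" f "poly 0"] assms by auto
  also have "\<dots> = 0" using nderiv_poly[OF assms(1,3)] by simp
  finally show ?thesis .
qed

lemma Ck_on_scaleR:
  fixes u :: "'a::euclidean_space"
  assumes cd: "c < d" and f: "Ck_on n {c..d} f"
  shows "Ck_on n {c..d} (\<lambda>x. f x *\<^sub>R u)"
    and "j \<le> n \<Longrightarrow> x \<in> {c..d} \<Longrightarrow> nderiv {c..d} j (\<lambda>x. f x *\<^sub>R u) x = nderiv {c..d} j f x *\<^sub>R u"
  using Ck_on_lincomb(1)[OF cd, where I="{u}" and g="\<lambda>_. f" and cv="\<lambda>i. i" and n=n]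
    Ck_on_lincomb(2)[OF cd, where I="{u}" and g="\<lambda>_. f" and cv="\<lambda>i. i" and n=n and j=j and x=x] f by auto

lemma Ck_on_sum:
  fixes f :: "'i \<Rightarrow> real \<Rightarrow> real"
  assumes cd: "c < d" and I: "finite I" and f: "\<And>i. i \<in> I \<Longrightarrow> Ck_on n {c..d} (f i)"
  shows "Ck_on n {c..d} (\<lambda>x. \<Sum>i\<in>I. cc i * f i x)"
  using Ck_on_lincomb(1)[OF cd I f, of "\<lambda>i. i" cc] by (simp add: mult.commute)

lemma sum_Basis_if_scaleR:
  fixes u0 :: "'a::euclidean_space"
  assumes "u0 \<in> Basis"
  shows "(\<Sum>u\<in>Basis. (if u = u0 then x else 0) *\<^sub>R u) = x *\<^sub>R u0"
  using assms by (simp add: if_distrib[of "\<lambda>t. t *\<^sub>R _"] sum.delta' cong: if_cong)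

lemma Ck_on_power_times:
  assumes g: "Ck_on n {-1..1} g"
  shows "Ck_on n {-1..1} (\<lambda>s. s^m * g s)"
proof (induction m)
  case 0
  then show ?case using g by simp
next
  case (Suc m)
  have "Ck_on n {-1..1} (\<lambda>x. x * (x^m * g x))" using Ck_on_times_id(1)[OF _ Suc] by simp
  then show ?case by (simp add: mult.assoc)
qed

lemma supn_nonneg_Ck:
  assumes "Ck_on n {-1..1} g" "j \<le> n"
  shows "0 \<le> supn {-1..1::real} (nderiv {-1..1} j g)"
  by (rule supn_nonneg[OF Ck_on_continuous[OF assms]]) auto

lemma nderiv_times_id_abs_le:
  fixes G :: "real \<Rightarrow> real"
  assumes G: "Ck_on n {-1..1} G" and j: "j \<le> n" and x: "x \<in> {-1..1}"
  shows "\<bar>nderiv {-1..1} j (\<lambda>s. s * G s) x\<bar>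
       \<le> \<bar>nderiv {-1..1} j G x\<bar> + real j * \<bar>nderiv {-1..1} (j - 1) G x\<bar>"
proof -
  have "nderiv {-1..1} j (\<lambda>s. s * G s) x = x * nderiv {-1..1} j G x + real j * nderiv {-1..1} (j - 1) G x"
    using Ck_on_times_id(2)[OF _ G j x] by simp
  moreover have "\<bar>x * nderiv {-1..1} j G x\<bar> \<le> \<bar>nderiv {-1..1} j G x\<bar>"
    using mult_right_mono[of "\<bar>x\<bar>" 1 "\<bar>nderiv {-1..1} j G x\<bar>"] x by (simp add: abs_mult abs_le_iff)
  moreover have "\<bar>real j * nderiv {-1..1} (j - 1) G x\<bar> = real j * \<bar>nderiv {-1..1} (j - 1) G x\<bar>"
    by (simp add: abs_mult)
  ultimately show ?thesis by linarith
qed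

lemma nderiv_power_times_bound:
  fixes g :: "real \<Rightarrow> real"
  assumes g: "Ck_on n {-1..1} g"
  shows "j \<le> n \<Longrightarrow> x \<in> {-1..1} \<Longrightarrow>
     \<bar>nderiv {-1..1} j (\<lambda>s. s ^ m * g s) x\<bar> \<le> real (j + 1) ^ m * (\<Sum>i\<le>j. supn {-1..1} (nderiv {-1..1} i g))"
proof (induction m arbitrary: j x)
  case 0
  have "\<bar>nderiv {-1..1} j g x\<bar> \<le> supn {-1..1} (nderiv {-1..1} j g)"
    using supn_upper[OF Ck_on_continuous[OF g], of j "{-1..1}" x] 0 by simp
  also have "\<dots> \<le> (\<Sum>i\<le>j. supn {-1..1} (nderiv {-1..1} i g))"
    by (rule member_le_sum) (use supn_nonneg_Ck[OF g] 0 in auto)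
  finally show ?case by simp
next
  case (Suc m)
  define M where "M = (\<lambda>j. \<Sum>i\<le>j. supn {-1..1} (nderiv {-1..1} i g))"
  have "Ck_on n {-1..1} (\<lambda>s. s ^ m * g s)" by (rule Ck_on_power_times[OF g])
  from nderiv_times_id_abs_le[OF this Suc.prems]
  have "\<bar>nderiv {-1..1} j (\<lambda>s. s ^ Suc m * g s) x\<bar>
      \<le> \<bar>nderiv {-1..1} j (\<lambda>s. s ^ m * g s) x\<bar> + real j * \<bar>nderiv {-1..1} (j - 1) (\<lambda>s. s ^ m * g s) x\<bar>"
    by (simp add: mult.assoc)
  also have "\<dots> \<le> real (j + 1) ^ m * M j + real j * (real (j + 1) ^ m * M j)"
  proof (rule add_mono)
    show "\<bar>nderiv {-1..1} j (\<lambda>s. s ^ m * g s) x\<bar> \<le> real (j + 1) ^ m * M j"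
      unfolding M_def by (rule Suc.IH[OF Suc.prems])
    have "\<bar>nderiv {-1..1} (j - 1) (\<lambda>s. s ^ m * g s) x\<bar> \<le> real (j + 1) ^ m * M j" if "j \<noteq> 0"
    proof -
      have "\<bar>nderiv {-1..1} (j - 1) (\<lambda>s. s ^ m * g s) x\<bar> \<le> real (j - 1 + 1) ^ m * M (j - 1)"
        unfolding M_def by (rule Suc.IH) (use Suc.prems in auto)
      also have "\<dots> \<le> real (j + 1) ^ m * M j"
        unfolding M_def using that Suc.prems supn_nonneg_Ck[OF g]
        by (intro mult_mono power_mono sum_mono2 sum_nonneg) auto
      finally show ?thesis .
    qed
    then show "real j * \<bar>nderiv {-1..1} (j - 1) (\<lambda>s. s ^ m * g s) x\<bar> \<le> real j * (real (j + 1) ^ m * M j)"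
      by (cases "j = 0") (auto intro: mult_left_mono)
  qed
  also have "\<dots> = real (j + 1) ^ Suc m * M j" by (simp add: algebra_simps)
  finally show ?case unfolding M_def .
qed

section \<open>Vector polynomials and the affine map\<close>

lemma Ck_on_vpolys:
  fixes p :: "real \<Rightarrow> 'a::euclidean_space"
  assumes "p \<in> vpolys n" "c < d"
  shows "Ck_on N {c..d} p"
proof -
  obtain cv where cv: "\<forall>x. p x = (\<Sum>i\<le>n. (x ^ i) *\<^sub>R cv i)" using assms(1) unfolding vpolys_def by blast
  have e: "p = (\<lambda>x. \<Sum>i\<le>n. poly (monom 1 i) x *\<^sub>R cv i)" using cv by (auto simp: poly_monom)
  show ?thesis unfolding e by (rule Ck_on_lincomb(1)[OF assms(2)]) (auto intro: Ck_on_poly[OF assms(2)])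
qed

lemma vpolys_component_poly:
  fixes p :: "real \<Rightarrow> 'a::euclidean_space"
  assumes "p \<in> vpolys n"
  shows "\<exists>P. degree P \<le> n \<and> (\<forall>x. poly P x = p x \<bullet> u)"
proof -
  obtain cv where cv: "\<forall>x. p x = (\<Sum>i\<le>n. (x ^ i) *\<^sub>R cv i)" using assms(1) unfolding vpolys_def by blast
  define P where "P = (\<Sum>i\<le>n. monom (cv i \<bullet> u) i)"
  have "degree P \<le> n" unfolding P_def
    by (intro degree_sum_le) (auto intro: order.trans[OF degree_monom_le])
  moreover have "poly P x = p x \<bullet> u" for x
    unfolding P_def using cv by (simp add: poly_sum poly_monom inner_sum_left mult.commute)
  ultimately show ?thesis by blast
qed

lemma vpolys_Tmap_component_poly:
  fixes p :: "real \<Rightarrow> 'a::euclidean_space"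
  assumes "p \<in> vpolys n"
  shows "\<exists>Q. degree Q \<le> n \<and> (\<forall>s. poly Q s = p (Tmap a b s) \<bullet> u)"
proof -
  obtain P where P: "degree P \<le> n" "\<forall>x. poly P x = p x \<bullet> u" using vpolys_component_poly[OF assms] by blast
  define Q where "Q = pcompose P [:(a+b)/2, (b-a)/2:]"
  have "degree Q \<le> degree P * degree [:(a+b)/2, (b-a)/2:]" unfolding Q_def by (simp add: degree_pcompose)
  also have "\<dots> \<le> degree P * 1" by (intro mult_left_mono) auto
  finally have "degree Q \<le> n" using P(1) by simp
  moreover have "poly Q s = p (Tmap a b s) \<bullet> u" for s
    unfolding Q_def poly_pcompose Tmap_def using P(2) by (simp add: algebra_simps)
  ultimately show ?thesis by blast
qed

lemma sum_poly_scaleR_vpolys: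
  fixes R :: "'a::euclidean_space \<Rightarrow> real poly" and cv :: "'a \<Rightarrow> 'b::real_vector"
  assumes "finite U" "\<forall>u\<in>U. degree (R u) \<le> n"
  shows "(\<lambda>x. \<Sum>u\<in>U. poly (R u) x *\<^sub>R cv u) \<in> vpolys n"
proof -
  have "(\<Sum>u\<in>U. poly (R u) x *\<^sub>R cv u) = (\<Sum>i\<le>n. (x ^ i) *\<^sub>R (\<Sum>u\<in>U. coeff (R u) i *\<^sub>R cv u))" for x
  proof -
    have "(\<Sum>u\<in>U. poly (R u) x *\<^sub>R cv u) = (\<Sum>u\<in>U. (\<Sum>i\<le>n. coeff (R u) i * x^i) *\<^sub>R cv u)"
    proof (intro sum.cong refl)
      fix u assume "u \<in> U"
      then have "poly (R u) x = (\<Sum>i\<le>n. coeff (R u) i * x^i)"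
        using assms(2) by (subst poly_as_sum_of_monoms'[symmetric, of "R u" n]) (auto simp: poly_sum poly_monom)
      then show "poly (R u) x *\<^sub>R cv u = (\<Sum>i\<le>n. coeff (R u) i * x^i) *\<^sub>R cv u" by simp
    qed
    also have "\<dots> = (\<Sum>u\<in>U. \<Sum>i\<le>n. (x^i) *\<^sub>R (coeff (R u) i *\<^sub>R cv u))"
      by (simp add: scaleR_sum_left mult.commute)
    also have "\<dots> = (\<Sum>i\<le>n. \<Sum>u\<in>U. (x^i) *\<^sub>R (coeff (R u) i *\<^sub>R cv u))" by (rule sum.swap)
    also have "\<dots> = (\<Sum>i\<le>n. (x ^ i) *\<^sub>R (\<Sum>u\<in>U. coeff (R u) i *\<^sub>R cv u))" by (simp add: scaleR_sum_right)
    finally show ?thesis .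
  qed
  then show ?thesis unfolding vpolys_def mem_Collect_eq
    by (intro exI[of _ "\<lambda>i. \<Sum>u\<in>U. coeff (R u) i *\<^sub>R cv u"]) simp
qed

lemma poly_scaleR_vpolys:
  fixes c :: "'b::real_vector"
  assumes "degree P \<le> n"
  shows "(\<lambda>x. poly P x *\<^sub>R c) \<in> vpolys n"
proof -
  have "poly P x *\<^sub>R c = (\<Sum>i\<le>n. (x ^ i) *\<^sub>R (coeff P i *\<^sub>R c))" for x
  proof -
    have "poly P x = (\<Sum>i\<le>n. coeff P i * x^i)"
      using assms by (subst poly_as_sum_of_monoms'[symmetric, of P n]) (auto simp: poly_sum poly_monom)
    then show ?thesis by (simp add: scaleR_sum_left mult.commute)
  qed
  then show ?thesis unfolding vpolys_def mem_Collect_eq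
    by (intro exI[of _ "\<lambda>i. coeff P i *\<^sub>R c"]) simp
qed

lemma Tinv_poly: "poly [:-(a+b)/(b-a), 2/(b-a):] x = Tinv a b x"
proof -
  have "- (a + b) / (b - a) + x * (2 / (b - a)) = (2 * x - a - b) / (b - (a::real))" by argo
  then show ?thesis unfolding Tinv_def by simp
qed

lemma Tmap_m1: "Tmap a b (-1) = a" and Tmap_1: "Tmap a b 1 = b"
  unfolding Tmap_def by (simp_all add: field_simps)

lemma Tinv_power_scaleR_vpolys:
  fixes u0 :: "'a::euclidean_space"
  shows "(\<lambda>x. (Tinv a b x)^m *\<^sub>R u0) \<in> vpolys m"
proof -
  define P where "P = pcompose (monom 1 m) [:-(a+b)/(b-a), 2/(b-a):]"
  have "degree P \<le> degree (monom (1::real) m) * degree [:-(a+b)/(b-a), 2/(b-a):]" unfolding P_def by (simp add: degree_pcompose)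
  also have "\<dots> \<le> m * 1" by (intro mult_mono) (auto simp: degree_monom_le)
  finally have "degree P \<le> m" by simp
  moreover have "poly P x = (Tinv a b x)^m" for x unfolding P_def poly_pcompose Tinv_poly by (simp add: poly_monom)
  ultimately show ?thesis using poly_scaleR_vpolys[of P m u0] by simp
qed

lemma vpolys_mono: "m \<le> n \<Longrightarrow> p \<in> vpolys m \<Longrightarrow> p \<in> vpolys n"
proof -
  assume mn: "m \<le> n" and p: "p \<in> vpolys m"
  obtain cv where cv: "\<forall>x. p x = (\<Sum>i\<le>m. (x ^ i) *\<^sub>R cv i)" using p unfolding vpolys_def by blast
  have "p x = (\<Sum>i\<le>n. (x ^ i) *\<^sub>R (if i \<le> m then cv i else 0))" for x
  proof -
    have "(\<Sum>i\<le>n. (x ^ i) *\<^sub>R (if i \<le> m then cv i else 0)) = (\<Sum>i\<le>m. (x ^ i) *\<^sub>R (if i \<le> m then cv i else 0))"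
      by (rule sum.mono_neutral_right) (use mn in auto)
    also have "\<dots> = (\<Sum>i\<le>m. (x ^ i) *\<^sub>R cv i)" by (intro sum.cong) auto
    finally show ?thesis using cv by simp
  qed
  then show "p \<in> vpolys n" unfolding vpolys_def mem_Collect_eq
    by (intro exI[of _ "\<lambda>i. if i \<le> m then cv i else 0"]) simp
qed

lemma nderiv_Tmap_component:
  fixes f :: "real \<Rightarrow> 'a::euclidean_space"
  assumes ab: "a < b" and f: "Ck_on N {a..b} f" and i: "i \<le> N" and s: "s \<in> {-1..1}"
  shows "nderiv {-1..1} i (\<lambda>s. f (Tmap a b s) \<bullet> u) s = ((b - a) / 2)^i * (nderiv {a..b} i f (Tmap a b s) \<bullet> u)"
proof -
  have "nderiv {-1..1} i (\<lambda>s. f (Tmap a b s) \<bullet> u) s = nderiv {-1..1} i (\<lambda>s. f (Tmap a b s)) s \<bullet> u"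
    using Ck_on_inner(2)[OF _ Ck_on_Tmap_comp(1)[OF ab f], of i s u] i s by simp
  also have "\<dots> = ((b - a) / 2)^i * (nderiv {a..b} i f (Tmap a b s) \<bullet> u)"
    using Ck_on_Tmap_comp(2)[OF ab f i s] by simp
  finally show ?thesis .
qed

lemma nderiv_Tmap_eq_iff:
  fixes p v :: "real \<Rightarrow> 'a::euclidean_space"
  assumes ab: "a < b" and pv: "p \<in> vpolys r" and vC: "Ck_on N {a..b} v" and i: "i \<le> N" and s: "s \<in> {-1..1}"
    and Q: "\<forall>u\<in>Basis. \<forall>s. poly (Q u) s = p (Tmap a b s) \<bullet> u"
  shows "nderiv {a..b} i p (Tmap a b s) = nderiv {a..b} i v (Tmap a b s) \<longleftrightarrow>
     (\<forall>u\<in>Basis. poly ((pderiv ^^ i) (Q u)) s = nderiv {-1..1} i (\<lambda>s. v (Tmap a b s) \<bullet> u) s)"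
proof -
  define h where "h = (b - a) / 2"
  have hi: "h^i \<noteq> 0" using ab unfolding h_def by simp
  have pC: "Ck_on N {a..b} p" by (rule Ck_on_vpolys[OF pv ab])
  have ep: "poly ((pderiv ^^ i) (Q u)) s = h^i * (nderiv {a..b} i p (Tmap a b s) \<bullet> u)" if u: "u \<in> Basis" for u
  proof -
    have "(\<lambda>s. p (Tmap a b s) \<bullet> u) = poly (Q u)" using Q u by auto
    then have "poly ((pderiv ^^ i) (Q u)) s = nderiv {-1..1} i (\<lambda>s. p (Tmap a b s) \<bullet> u) s"
      using nderiv_poly[of "-1" 1 s i "Q u"] s by simp
    then show ?thesis using nderiv_Tmap_component[OF ab pC i s, of u] unfolding h_def by simp
  qed
  have ev: "nderiv {-1..1} i (\<lambda>s. v (Tmap a b s) \<bullet> u) s = h^i * (nderiv {a..b} i v (Tmap a b s) \<bullet> u)" for u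
    using nderiv_Tmap_component[OF ab vC i s, of u] unfolding h_def by simp
  show ?thesis
    unfolding euclidean_eq_iff[of "nderiv {a..b} i p (Tmap a b s)"] using ep ev hi by auto
qed

lemma supn_Tmap_component_le:
  fixes v :: "real \<Rightarrow> 'a::euclidean_space"
  assumes ab: "a < b" and vC: "Ck_on N {a..b} v" and j: "j \<le> N" and u: "u \<in> Basis"
  shows "supn {-1..1} (nderiv {-1..1} j (\<lambda>s. v (Tmap a b s) \<bullet> u)) \<le> ((b - a) / 2)^j * supn {a<..b} (nderiv {a..b} j v)"
proof (rule supn_le)
  show "{-1..1::real} \<noteq> {}" by simp
next
  fix s :: real assume s: "s \<in> {-1..1}"
  have h0: "0 \<le> ((b - a) / 2)^j" using ab by simp
  have T: "Tmap a b s \<in> {a..b}" using Tmap_image[OF ab] s by auto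
  have cont: "continuous_on (closure {a<..b}) (nderiv {a..b} j v)"
    using Ck_on_continuous[OF vC j] closure_greaterThanAtMost[OF ab] by simp
  have "\<forall>y\<in>{a<..b}. norm (nderiv {a..b} j v y) \<le> supn {a<..b} (nderiv {a..b} j v)"
  proof
    fix y assume "y \<in> {a<..b}"
    moreover have sub: "{a<..b} \<subseteq> {a..b}" by auto
    ultimately show "norm (nderiv {a..b} j v y) \<le> supn {a<..b} (nderiv {a..b} j v)"
      using supn_upper[OF Ck_on_continuous[OF vC j] compact_Icc sub] by blast
  qed
  then have nb: "norm (nderiv {a..b} j v (Tmap a b s)) \<le> supn {a<..b} (nderiv {a..b} j v)"
    using continuous_on_closure_norm_le[OF cont] T closure_greaterThanAtMost[OF ab] by blast
  have "norm (nderiv {-1..1} j (\<lambda>s. v (Tmap a b s) \<bullet> u) s) = ((b - a) / 2)^j * \<bar>nderiv {a..b} j v (Tmap a b s) \<bullet> u\<bar>"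
    using nderiv_Tmap_component[OF ab vC j s, of u] h0 by (simp add: abs_mult)
  also have "\<dots> \<le> ((b - a) / 2)^j * norm (nderiv {a..b} j v (Tmap a b s))"
    by (intro mult_left_mono h0 Basis_le_norm u)
  also have "\<dots> \<le> ((b - a) / 2)^j * supn {a<..b} (nderiv {a..b} j v)"
    by (intro mult_left_mono h0 nb)
  finally show "norm (nderiv {-1..1} j (\<lambda>s. v (Tmap a b s) \<bullet> u) s) \<le> ((b - a) / 2)^j * supn {a<..b} (nderiv {a..b} j v)" .
qed

lemma vpolys_Tmap_derivative_bound:
  fixes p :: "real \<Rightarrow> 'a::euclidean_space" and c :: "'a \<Rightarrow> nat \<Rightarrow> real"
  assumes ab: "a < b" and pv: "p \<in> vpolys r"
    and comp: "\<forall>u\<in>Basis. \<forall>s. poly (\<Sum>i\<le>r. monom (c u i) i) s = p (Tmap a b s) \<bullet> u"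
    and cM: "\<And>u i. u \<in> Basis \<Longrightarrow> \<bar>c u i\<bar> \<le> M i"
  shows "supn {a<..b} (nderiv {a..b} l p) \<le> real DIM('a) * (\<Sum>i\<le>r. M i * real i ^ l) / ((b - a) / 2) ^ l"
proof (rule supn_le)
  show "{a<..b} \<noteq> {}" using ab by simp
next
  fix x assume x: "x \<in> {a<..b}"
  define h where "h = (b - a) / 2"
  have h0: "0 < h" using ab unfolding h_def by simp
  define s where "s = Tinv a b x"
  have xs: "Tmap a b s = x" unfolding s_def by (rule Tmap_Tinv[OF ab])
  have s1: "s \<in> {-1..1}"
  proof -
    have "x \<in> Tmap a b ` {-1..1}" using Tmap_image[OF ab] x by auto
    then obtain s' where "s' \<in> {-1..1}" "x = Tmap a b s'" by auto
    then show ?thesis unfolding s_def using Tinv_Tmap[OF ab] by auto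
  qed
  have pC: "Ck_on l {a..b} p" by (rule Ck_on_vpolys[OF pv ab])
  have "\<bar>nderiv {a..b} l p x \<bullet> u\<bar> \<le> (\<Sum>i\<le>r. M i * real i ^ l) / h ^ l" if u: "u \<in> Basis" for u
  proof -
    have "(\<lambda>s. p (Tmap a b s) \<bullet> u) = poly (\<Sum>i\<le>r. monom (c u i) i)" using comp u by auto
    then have "poly ((pderiv ^^ l) (\<Sum>i\<le>r. monom (c u i) i)) s = h ^ l * (nderiv {a..b} l p x \<bullet> u)"
      using nderiv_poly[of "-1" 1 s l] nderiv_Tmap_component[OF ab pC order_refl s1, of u] s1 xs
      unfolding h_def by simp
    then have "\<bar>nderiv {a..b} l p x \<bullet> u\<bar> = \<bar>poly ((pderiv ^^ l) (\<Sum>i\<le>r. monom (c u i) i)) s\<bar> / h ^ l"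
      using h0 by (simp add: field_simps abs_mult)
    also have "\<dots> \<le> (\<Sum>i\<le>r. \<bar>c u i\<bar> * real i ^ l) / h ^ l"
      by (intro divide_right_mono higher_pderiv_sum_monom_bound) (use s1 h0 in auto)
    also have "\<dots> \<le> (\<Sum>i\<le>r. M i * real i ^ l) / h ^ l"
      by (intro divide_right_mono sum_mono mult_right_mono cM u) (use h0 in auto)
    finally show ?thesis .
  qed
  then have "norm (nderiv {a..b} l p x) \<le> (\<Sum>u\<in>(Basis::'a set). (\<Sum>i\<le>r. M i * real i ^ l) / h ^ l)"
    by (intro order.trans[OF norm_le_l1] sum_mono)
  then show "norm (nderiv {a..b} l p x) \<le> real DIM('a) * (\<Sum>i\<le>r. M i * real i ^ l) / ((b - a) / 2) ^ l"
    by (simp add: h_def)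
qed

lemma sum_double_delta:
  fixes X :: "'a::euclidean_space \<Rightarrow> nat \<Rightarrow> real"
  assumes "u0 \<in> Basis" "m \<le> n"
  shows "(\<Sum>u\<in>Basis. \<Sum>m'\<le>n. (if u = u0 \<and> m' = m then 1 else 0) * X u m') = X u0 m"
proof -
  have "(\<Sum>u\<in>Basis. \<Sum>m'\<le>n. (if u = u0 \<and> m' = m then 1 else 0) * X u m') = (\<Sum>u\<in>Basis. if u = u0 then X u0 m else 0)"
  proof (intro sum.cong refl)
    fix u :: 'a assume "u \<in> Basis"
    show "(\<Sum>m'\<le>n. (if u = u0 \<and> m' = m then 1 else 0) * X u m') = (if u = u0 then X u0 m else 0)"
      using assms(2) by (cases "u = u0") (auto simp: if_distrib[of "\<lambda>t. t * _"] cong: if_cong)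
  qed
  also have "\<dots> = X u0 m" using assms(1) by simp
  finally show ?thesis .
qed

lemma Tinv_power_scaleR_Tmap_components:
  fixes u0 :: "'a::euclidean_space"
  assumes ab: "a < b" and u0: "u0 \<in> Basis" and m: "m \<le> n"
  shows "\<forall>u\<in>Basis. \<forall>s. (Tinv a b (Tmap a b s))^m *\<^sub>R u0 \<bullet> u = (\<Sum>m'\<le>n. (if u = u0 \<and> m' = m then 1 else 0) * s^m')"
proof (intro ballI allI)
  fix u :: 'a and s :: real assume u: "u \<in> Basis"
  have "(\<Sum>m'\<le>n. (if u = u0 \<and> m' = m then 1 else 0) * s^m') = (if u = u0 then s^m else 0)"
    using m by (cases "u = u0") (auto simp: if_distrib[of "\<lambda>t. t * _"] cong: if_cong)
  then show "(Tinv a b (Tmap a b s))^m *\<^sub>R u0 \<bullet> u = (\<Sum>m'\<le>n. (if u = u0 \<and> m' = m then 1 else 0) * s^m')"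
    using u u0 Tinv_Tmap[OF ab] by (auto simp: inner_Basis)
qed

lemma all_le_split_three:
  fixes k n r :: nat
  assumes "k \<le> r" and "n \<le> k"
  shows "(\<forall>\<rho>\<le>r. P \<rho>) \<longleftrightarrow> (\<forall>\<rho><n. P \<rho>) \<and> (\<forall>\<rho>. n \<le> \<rho> \<and> \<rho> < k \<longrightarrow> P \<rho>) \<and> (\<forall>m\<le>r - k. P (k + m))"
proof
  assume "\<forall>\<rho>\<le>r. P \<rho>"
  then have h: "\<And>\<rho>. \<rho> \<le> r \<Longrightarrow> P \<rho>" by blast
  show "(\<forall>\<rho><n. P \<rho>) \<and> (\<forall>\<rho>. n \<le> \<rho> \<and> \<rho> < k \<longrightarrow> P \<rho>) \<and> (\<forall>m\<le>r - k. P (k + m))"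
    using assms by (intro conjI allI impI h) auto
next
  assume H: "(\<forall>\<rho><n. P \<rho>) \<and> (\<forall>\<rho>. n \<le> \<rho> \<and> \<rho> < k \<longrightarrow> P \<rho>) \<and> (\<forall>m\<le>r - k. P (k + m))"
  show "\<forall>\<rho>\<le>r. P \<rho>"
  proof (intro allI impI)
    fix \<rho> assume "\<rho> \<le> r"
    consider "\<rho> < n" | "n \<le> \<rho> \<and> \<rho> < k" | "k \<le> \<rho>" by linarith
    then show "P \<rho>"
    proof cases
      case 3
      then have "\<rho> = k + (\<rho> - k)" "\<rho> - k \<le> r - k" using \<open>\<rho> \<le> r\<close> by auto
      then show ?thesis using H by metis
    qed (use H in auto)
  qed
qed

lemma Tmap_left_inner_expand:
  fixes f \<phi> :: "real \<Rightarrow> 'a::euclidean_space"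
  assumes d: "\<forall>u\<in>Basis. \<forall>s. \<phi> (Tmap a b s) \<bullet> u = (\<Sum>m\<le>n. d u m * s ^ m)"
  shows "f a \<bullet> \<phi> a = (\<Sum>u\<in>Basis. \<Sum>m\<le>n. d u m * ((f (Tmap a b (-1)) \<bullet> u) * (-1) ^ m))"
proof -
  have "f a \<bullet> \<phi> a = (\<Sum>u\<in>Basis. (f (Tmap a b (-1)) \<bullet> u) * (\<phi> (Tmap a b (-1)) \<bullet> u))"
    unfolding Tmap_m1 by (rule euclidean_inner)
  also have "\<dots> = (\<Sum>u\<in>Basis. (f (Tmap a b (-1)) \<bullet> u) * (\<Sum>m\<le>n. d u m * (-1) ^ m))"
    by (intro sum.cong refl) (use d in auto)
  finally show ?thesis by (simp add: sum_distrib_left algebra_simps)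
qed

lemma Tmap_components_vpolys:
  fixes Q :: "'a::euclidean_space \<Rightarrow> real poly"
  assumes ab: "a < b" and dQ: "\<And>u. degree (Q u) \<le> r"
  shows "(\<lambda>x. \<Sum>u\<in>Basis. poly (Q u) (Tinv a b x) *\<^sub>R u) \<in> vpolys r"
    and "u \<in> Basis \<Longrightarrow> (\<Sum>u'\<in>Basis. poly (Q u') (Tinv a b (Tmap a b s)) *\<^sub>R u') \<bullet> u = poly (Q u) s"
proof -
  define Li where "Li = [:-(a+b)/(b-a), 2/(b-a):]"
  have "degree (pcompose (Q u) Li) \<le> r" for u
  proof -
    have "degree (pcompose (Q u) Li) \<le> degree (Q u) * degree Li" by (simp add: degree_pcompose)
    also have "\<dots> \<le> r * 1" by (intro mult_mono dQ) (auto simp: Li_def)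
    finally show ?thesis by simp
  qed
  then have "(\<lambda>x. \<Sum>u\<in>Basis. poly (pcompose (Q u) Li) x *\<^sub>R u) \<in> vpolys r"
    by (intro sum_poly_scaleR_vpolys) auto
  then show "(\<lambda>x. \<Sum>u\<in>Basis. poly (Q u) (Tinv a b x) *\<^sub>R u) \<in> vpolys r"
    unfolding Li_def poly_pcompose Tinv_poly .
next
  assume u: "u \<in> Basis"
  have "(\<Sum>u'\<in>Basis. poly (Q u') (Tinv a b (Tmap a b s)) *\<^sub>R u') \<bullet> u = (\<Sum>u'\<in>Basis. poly (Q u') s * (u' \<bullet> u))"
    unfolding Tinv_Tmap[OF ab] by (simp add: inner_sum_left)
  also have "\<dots> = (\<Sum>u'\<in>Basis. if u' = u then poly (Q u) s else 0)"
    by (intro sum.cong refl) (use u in \<open>auto simp: inner_Basis\<close>)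
  finally show "(\<Sum>u'\<in>Basis. poly (Q u') (Tinv a b (Tmap a b s)) *\<^sub>R u') \<bullet> u = poly (Q u) s"
    using u by simp
qed

lemma components_Tmap_representation:
  fixes p :: "real \<Rightarrow> 'a::euclidean_space"
  assumes ab: "a < b" and Q: "\<forall>u\<in>Basis. \<forall>s. poly (Q u) s = p (Tmap a b s) \<bullet> u"
  shows "p = (\<lambda>x. \<Sum>u\<in>Basis. poly (Q u) (Tinv a b x) *\<^sub>R u)"
proof
  fix x
  have "p x = (\<Sum>u\<in>Basis. (p x \<bullet> u) *\<^sub>R u)" by (rule euclidean_representation[symmetric])
  also have "\<dots> = (\<Sum>u\<in>Basis. poly (Q u) (Tinv a b x) *\<^sub>R u)"
    using Q by (intro sum.cong refl) (auto simp: Tmap_Tinv[OF ab])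
  finally show "p x = (\<Sum>u\<in>Basis. poly (Q u) (Tinv a b x) *\<^sub>R u)" .
qed

section \<open>The reference functional and operator\<close>

definition linear_Ck_functional :: "nat \<Rightarrow> ((real \<Rightarrow> real) \<Rightarrow> real) \<Rightarrow> bool" where
  "linear_Ck_functional kJs Jh \<longleftrightarrow> (\<forall>f g (\<alpha>::real) \<beta>. Ck_on kJs {-1..1} f \<and> Ck_on kJs {-1..1} g \<longrightarrow>
                 Jh (\<lambda>s. \<alpha> * f s + \<beta> * g s) = \<alpha> * Jh f + \<beta> * Jh g)"

definition linear_Ck_operator :: "nat \<Rightarrow> ((real \<Rightarrow> real) \<Rightarrow> real \<Rightarrow> real) \<Rightarrow> bool" where
  "linear_Ck_operator kI Ih \<longleftrightarrow> (\<forall>f g (\<alpha>::real) \<beta>. Ck_on kI {-1..1} f \<and> Ck_on kI {-1..1} g \<longrightarrow>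
                 (\<forall>s\<in>{-1..1}. Ih (\<lambda>x. \<alpha> * f x + \<beta> * g x) s = \<alpha> * Ih f s + \<beta> * Ih g s))"

definition Ck_regularizing :: "nat \<Rightarrow> ((real \<Rightarrow> real) \<Rightarrow> real \<Rightarrow> real) \<Rightarrow> bool" where
  "Ck_regularizing kI Ih \<longleftrightarrow> (\<forall>l f. Ck_on (max kI l) {-1..1} f \<longrightarrow> Ck_on l {-1..1} (Ih f))"

lemma linear_Ck_functionalD: "linear_Ck_functional kJs Jh \<Longrightarrow> Ck_on kJs {-1..1} f \<Longrightarrow> Ck_on kJs {-1..1} g \<Longrightarrow>
   Jh (\<lambda>s. \<alpha> * f s + \<beta> * g s) = \<alpha> * Jh f + \<beta> * Jh g"
  unfolding linear_Ck_functional_def by blast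

lemma linear_Ck_operatorD: "linear_Ck_operator kI Ih \<Longrightarrow> Ck_on kI {-1..1} f \<Longrightarrow> Ck_on kI {-1..1} g \<Longrightarrow> s \<in> {-1..1} \<Longrightarrow>
   Ih (\<lambda>x. \<alpha> * f x + \<beta> * g x) s = \<alpha> * Ih f s + \<beta> * Ih g s"
  unfolding linear_Ck_operator_def by blast

lemma Jh_zero: "linear_Ck_functional kJs Jh \<Longrightarrow> Jh (\<lambda>s. 0) = 0"
  using linear_Ck_functionalD[of kJs Jh "\<lambda>s. 0" "\<lambda>s. 0" 0 0] Ck_on_zero[of "-1" 1] by simp

lemma Ih_zero: "linear_Ck_operator kI Ih \<Longrightarrow> s \<in> {-1..1} \<Longrightarrow> Ih (\<lambda>s. 0) s = 0"
  using linear_Ck_operatorD[of kI Ih "\<lambda>s. 0" "\<lambda>s. 0" s 0 0] Ck_on_zero[of "-1" 1] by simp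

lemma Ih_scale: "linear_Ck_operator kI Ih \<Longrightarrow> Ck_on kI {-1..1} f \<Longrightarrow> s \<in> {-1..1} \<Longrightarrow> Ih (\<lambda>x. c * f x) s = c * Ih f s"
  using linear_Ck_operatorD[of kI Ih f f s c 0] by simp

lemma linear_on_polys_if_linear_Ck_functional: "linear_Ck_functional kJs Jh \<Longrightarrow> linear_on_polys Jh"
  unfolding linear_on_polys_def using linear_Ck_functionalD[of kJs Jh] Ck_on_poly[of "-1" 1] by simp

lemma inner_scaleR_Basis_fun:
  fixes u0 u :: "'a::euclidean_space"
  assumes "u0 \<in> Basis" "u \<in> Basis"
  shows "(\<lambda>s. (f s *\<^sub>R u0) \<bullet> u) = (if u = u0 then f else (\<lambda>s. 0))"
  using assms by (auto simp: inner_Basis)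

lemma vecJ_scaleR_Basis:
  fixes u0 :: "'a::euclidean_space"
  assumes L: "linear_Ck_functional kJs Jh" and u0: "u0 \<in> Basis"
  shows "vecJ Jh (\<lambda>s. f s *\<^sub>R u0) = Jh f *\<^sub>R u0"
proof -
  have "vecJ Jh (\<lambda>s. f s *\<^sub>R u0) = (\<Sum>u\<in>Basis. (if u = u0 then Jh f else 0) *\<^sub>R u)"
    unfolding vecJ_def
  proof (intro sum.cong refl)
    fix u :: 'a assume u: "u \<in> Basis"
    show "Jh (\<lambda>s. (f s *\<^sub>R u0) \<bullet> u) *\<^sub>R u = (if u = u0 then Jh f else 0) *\<^sub>R u"
      unfolding inner_scaleR_Basis_fun[OF u0 u] by (auto simp: Jh_zero[OF L])
  qed
  then show ?thesis using sum_Basis_if_scaleR[OF u0] by simp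
qed

lemma vecI_scaleR_Basis:
  fixes u0 :: "'a::euclidean_space"
  assumes L: "linear_Ck_operator kI Ih" and u0: "u0 \<in> Basis" and s: "s \<in> {-1..1}"
  shows "vecI Ih (\<lambda>s. f s *\<^sub>R u0) s = Ih f s *\<^sub>R u0"
proof -
  have "vecI Ih (\<lambda>s. f s *\<^sub>R u0) s = (\<Sum>u\<in>Basis. (if u = u0 then Ih f s else 0) *\<^sub>R u)"
    unfolding vecI_def
  proof (intro sum.cong refl)
    fix u :: 'a assume u: "u \<in> Basis"
    show "Ih (\<lambda>s. (f s *\<^sub>R u0) \<bullet> u) s *\<^sub>R u = (if u = u0 then Ih f s else 0) *\<^sub>R u"
      unfolding inner_scaleR_Basis_fun[OF u0 u] by (auto simp: Ih_zero[OF L s])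
  qed
  then show ?thesis using sum_Basis_if_scaleR[OF u0] by simp
qed

lemma scalar_bound_from_A2:
  assumes A2: "\<exists>C0. \<forall>\<phi>::real \<Rightarrow> 'a::euclidean_space. Ck_on kJs {-1..1} \<phi> \<longrightarrow>
               norm (vecJ Jh \<phi>) \<le> C0 * (\<Sum>j\<le>kJs. supn {-1..1} (nderiv {-1..1} j \<phi>))"
    and L: "linear_Ck_functional kJs Jh"
  shows "\<exists>C0\<ge>0. \<forall>f. Ck_on kJs {-1..1} f \<longrightarrow> \<bar>Jh f\<bar> \<le> C0 * (\<Sum>j\<le>kJs. supn {-1..1} (nderiv {-1..1} j f))"
proof -
  obtain C0 where C0: "\<And>\<phi>::real \<Rightarrow> 'a. Ck_on kJs {-1..1} \<phi> \<Longrightarrow>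
               norm (vecJ Jh \<phi>) \<le> C0 * (\<Sum>j\<le>kJs. supn {-1..1} (nderiv {-1..1} j \<phi>))" using A2 by blast
  obtain u0 :: 'a where u0: "u0 \<in> Basis" using nonempty_Basis by blast
  have "\<bar>Jh f\<bar> \<le> \<bar>C0\<bar> * (\<Sum>j\<le>kJs. supn {-1..1} (nderiv {-1..1} j f))" if f: "Ck_on kJs {-1..1} f" for f
  proof -
    have \<phi>: "Ck_on kJs {-1..1} (\<lambda>s. f s *\<^sub>R u0)" using Ck_on_scaleR(1)[of "-1" 1 kJs f u0] f by simp
    have "norm (vecJ Jh (\<lambda>s. f s *\<^sub>R u0)) = \<bar>Jh f\<bar>" using vecJ_scaleR_Basis[OF L u0] u0 by simp
    moreover have "supn {-1..1} (nderiv {-1..1} j (\<lambda>s. f s *\<^sub>R u0)) = supn {-1..1} (nderiv {-1..1} j f)" if "j \<le> kJs" for j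
      by (rule supn_cong) (use Ck_on_scaleR(2)[of "-1" 1 kJs f j _ u0] f that u0 in auto)
    ultimately have "\<bar>Jh f\<bar> \<le> C0 * (\<Sum>j\<le>kJs. supn {-1..1} (nderiv {-1..1} j f))"
      using C0[OF \<phi>] by simp
    moreover have "0 \<le> (\<Sum>j\<le>kJs. supn {-1..1} (nderiv {-1..1} j f))"
      by (intro sum_nonneg supn_nonneg[of "{-1..1}"] Ck_on_continuous[OF f]) auto
    ultimately show ?thesis by (meson abs_ge_self mult_right_mono order.trans)
  qed
  then show ?thesis by (intro exI[of _ "\<bar>C0\<bar>"]) auto
qed

lemma scalar_bound_from_A3:
  assumes A3: "\<exists>C1. \<forall>l\<le>kJs. \<forall>\<phi>::real \<Rightarrow> 'a::euclidean_space. Ck_on (max kI l) {-1..1} \<phi> \<longrightarrow>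
               supn {-1..1} (nderiv {-1..1} l (vecI Ih \<phi>))
                 \<le> C1 * (\<Sum>j\<le>max kI l. supn {-1..1} (nderiv {-1..1} j \<phi>))"
    and L: "linear_Ck_operator kI Ih" and R: "Ck_regularizing kI Ih"
  shows "\<exists>C1\<ge>0. \<forall>l\<le>kJs. \<forall>f. Ck_on (max kI l) {-1..1} f \<longrightarrow>
               supn {-1..1} (nderiv {-1..1} l (Ih f)) \<le> C1 * (\<Sum>j\<le>max kI l. supn {-1..1} (nderiv {-1..1} j f))"
proof -
  obtain C1 where C1: "\<And>l \<phi>. l \<le> kJs \<Longrightarrow> Ck_on (max kI l) {-1..1} (\<phi>::real \<Rightarrow> 'a) \<Longrightarrow>
               supn {-1..1} (nderiv {-1..1} l (vecI Ih \<phi>))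
                 \<le> C1 * (\<Sum>j\<le>max kI l. supn {-1..1} (nderiv {-1..1} j \<phi>))" using A3 by blast
  obtain u0 :: 'a where u0: "u0 \<in> Basis" using nonempty_Basis by blast
  have "supn {-1..1} (nderiv {-1..1} l (Ih f)) \<le> \<bar>C1\<bar> * (\<Sum>j\<le>max kI l. supn {-1..1} (nderiv {-1..1} j f))"
    if l: "l \<le> kJs" and f: "Ck_on (max kI l) {-1..1} f" for l f
  proof -
    have \<phi>: "Ck_on (max kI l) {-1..1} (\<lambda>s. f s *\<^sub>R u0)" using Ck_on_scaleR(1)[of "-1" 1 _ f u0] f by simp
    have If: "Ck_on l {-1..1} (Ih f)" using R f unfolding Ck_regularizing_def by blast
    have e1: "\<forall>s\<in>{-1..1}. vecI Ih (\<lambda>s. f s *\<^sub>R u0) s = Ih f s *\<^sub>R u0"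
      using vecI_scaleR_Basis[OF L u0] by blast
    have "supn {-1..1} (nderiv {-1..1} l (vecI Ih (\<lambda>s. f s *\<^sub>R u0))) = supn {-1..1} (nderiv {-1..1} l (Ih f))"
    proof (rule supn_cong)
      fix s :: real assume s: "s \<in> {-1..1}"
      have "nderiv {-1..1} l (vecI Ih (\<lambda>s. f s *\<^sub>R u0)) s = nderiv {-1..1} l (\<lambda>s. Ih f s *\<^sub>R u0) s"
        by (rule nderiv_cong[OF e1 s])
      also have "\<dots> = nderiv {-1..1} l (Ih f) s *\<^sub>R u0" using Ck_on_scaleR(2)[of "-1" 1 l "Ih f" l s u0] If s by simp
      finally show "norm (nderiv {-1..1} l (vecI Ih (\<lambda>s. f s *\<^sub>R u0)) s) = norm (nderiv {-1..1} l (Ih f) s)"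
        using u0 by simp
    qed
    moreover have "supn {-1..1} (nderiv {-1..1} j (\<lambda>s. f s *\<^sub>R u0)) = supn {-1..1} (nderiv {-1..1} j f)" if "j \<le> max kI l" for j
      by (rule supn_cong) (use Ck_on_scaleR(2)[of "-1" 1 "max kI l" f j _ u0] f that u0 in auto)
    ultimately have "supn {-1..1} (nderiv {-1..1} l (Ih f)) \<le> C1 * (\<Sum>j\<le>max kI l. supn {-1..1} (nderiv {-1..1} j f))"
      using C1[OF l \<phi>] by simp
    moreover have "0 \<le> (\<Sum>j\<le>max kI l. supn {-1..1} (nderiv {-1..1} j f))"
      by (intro sum_nonneg supn_nonneg[of "{-1..1}"] Ck_on_continuous[OF f]) auto
    ultimately show ?thesis by (meson abs_ge_self mult_right_mono order.trans)
  qed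
  then show ?thesis by (intro exI[of _ "\<bar>C1\<bar>"]) auto
qed

lemma Jh_cong_on:
  assumes L: "linear_Ck_functional kJs Jh"
    and JB: "\<forall>f. Ck_on kJs {-1..1} f \<longrightarrow> \<bar>Jh f\<bar> \<le> C0 * (\<Sum>j\<le>kJs. supn {-1..1} (nderiv {-1..1} j f))"
    and f: "Ck_on kJs {-1..1} f" and g: "Ck_on kJs {-1..1} g" and fg: "\<forall>s\<in>{-1..1}. f s = g s"
  shows "Jh f = Jh g"
proof -
  define d where "d = (\<lambda>s. 1 * f s + (-1) * g s)"
  have dz: "\<forall>s\<in>{-1..1}. d s = 0" using fg unfolding d_def by simp
  have dC: "Ck_on kJs {-1..1} d" by (rule Ck_on_cong[OF _ Ck_on_zero[of "-1" 1 kJs]]) (use dz in auto)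
  have "Jh d = Jh f - Jh g" unfolding d_def using linear_Ck_functionalD[OF L f g, of 1 "-1"] by simp
  moreover have "supn {-1..1} (nderiv {-1..1} j d) = 0" for j
    by (rule supn_zero) (use nderiv_zero_on[of "-1" 1 d] dz in auto)
  ultimately have "\<bar>Jh f - Jh g\<bar> \<le> 0" using JB dC by (metis (no_types, lifting) mult_zero_right sum.neutral)
  then show ?thesis by simp
qed

lemma Ih_cong_on:
  assumes L: "linear_Ck_operator kI Ih" and R: "Ck_regularizing kI Ih"
    and IB: "\<forall>f. Ck_on kI {-1..1} f \<longrightarrow> supn {-1..1} (nderiv {-1..1} 0 (Ih f)) \<le> C1 * (\<Sum>j\<le>kI. supn {-1..1} (nderiv {-1..1} j f))"
    and f: "Ck_on kI {-1..1} f" and g: "Ck_on kI {-1..1} g" and fg: "\<forall>s\<in>{-1..1}. f s = g s"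
    and s: "s \<in> {-1..1}"
  shows "Ih f s = Ih g s"
proof -
  define d where "d = (\<lambda>s. 1 * f s + (-1) * g s)"
  have dz: "\<forall>s\<in>{-1..1}. d s = 0" using fg unfolding d_def by simp
  have dC: "Ck_on kI {-1..1} d" by (rule Ck_on_cong[OF _ Ck_on_zero[of "-1" 1 kI]]) (use dz in auto)
  have "Ih d s = Ih f s - Ih g s" unfolding d_def using linear_Ck_operatorD[OF L f g s, of 1 "-1"] by simp
  moreover have "supn {-1..1} (nderiv {-1..1} j d) = 0" for j
    by (rule supn_zero) (use nderiv_zero_on[of "-1" 1 d] dz in auto)
  moreover have "supn {-1..1} (Ih d) \<le> C1 * (\<Sum>j\<le>kI. supn {-1..1} (nderiv {-1..1} j d))" using IB dC by simp
  ultimately have sup0: "supn {-1..1} (Ih d) \<le> 0" by simp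
  have "Ck_on 0 {-1..1} (Ih d)" using R dC unfolding Ck_regularizing_def by (metis max_0R)
  then have "continuous_on {-1..1} (Ih d)" using Ck_on_continuous[of 0 _ "Ih d" 0] by simp
  then have "norm (Ih d s) \<le> supn {-1..1} (Ih d)" using supn_upper[of "{-1..1}" "Ih d" "{-1..1}" s] s by simp
  then have "\<bar>Ih f s - Ih g s\<bar> \<le> 0" using sup0 \<open>Ih d s = _\<close> by simp
  then show ?thesis by simp
qed

lemma Jh_sum:
  fixes c :: "'i \<Rightarrow> real"
  assumes L: "linear_Ck_functional kJs Jh" and I: "finite I" and f: "\<And>i. i \<in> I \<Longrightarrow> Ck_on kJs {-1..1} (f i)"
  shows "Jh (\<lambda>s. \<Sum>i\<in>I. c i * f i s) = (\<Sum>i\<in>I. c i * Jh (f i))"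
  using I f
proof (induction I rule: finite_induct)
  case empty
  then show ?case using Jh_zero[OF L] by simp
next
  case (insert x F)
  have FC: "Ck_on kJs {-1..1} (\<lambda>s. \<Sum>i\<in>F. c i * f i s)"
    by (rule Ck_on_sum) (use insert in auto)
  have "Jh (\<lambda>s. c x * f x s + 1 * (\<Sum>i\<in>F. c i * f i s)) = c x * Jh (f x) + 1 * Jh (\<lambda>s. \<Sum>i\<in>F. c i * f i s)"
    by (rule linear_Ck_functionalD[OF L]) (use insert FC in auto)
  then show ?case using insert by simp
qed

lemma Jh_double_sum:
  fixes c :: "'u \<Rightarrow> 'm \<Rightarrow> real"
  assumes L: "linear_Ck_functional kJs Jh" and U: "finite U" and M: "finite M"
    and f: "\<And>u m. u \<in> U \<Longrightarrow> m \<in> M \<Longrightarrow> Ck_on kJs {-1..1} (f u m)"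
  shows "Jh (\<lambda>s. \<Sum>u\<in>U. \<Sum>m\<in>M. c u m * f u m s) = (\<Sum>u\<in>U. \<Sum>m\<in>M. c u m * Jh (f u m))"
proof -
  have "Jh (\<lambda>s. \<Sum>u\<in>U. 1 * (\<Sum>m\<in>M. c u m * f u m s)) = (\<Sum>u\<in>U. 1 * Jh (\<lambda>s. \<Sum>m\<in>M. c u m * f u m s))"
    by (rule Jh_sum[OF L U]) (rule Ck_on_sum, use M f in auto)
  also have "\<dots> = (\<Sum>u\<in>U. \<Sum>m\<in>M. c u m * Jh (f u m))"
    by (intro sum.cong refl) (use Jh_sum[OF L M] f in auto)
  finally show ?thesis by simp
qed

lemma Ck_on_double_sum:
  fixes c :: "'u \<Rightarrow> 'm \<Rightarrow> real"
  assumes U: "finite U" and M: "finite M"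
    and f: "\<And>u m. u \<in> U \<Longrightarrow> m \<in> M \<Longrightarrow> Ck_on n {-1..1} (f u m)"
  shows "Ck_on n {-1..1} (\<lambda>s. \<Sum>u\<in>U. \<Sum>m\<in>M. c u m * f u m s)"
proof -
  have "Ck_on n {-1..1} (\<lambda>s. \<Sum>u\<in>U. 1 * (\<Sum>m\<in>M. c u m * f u m s))"
  proof (rule Ck_on_sum[OF _ U])
    fix u assume u: "u \<in> U"
    show "Ck_on n {-1..1} (\<lambda>s. \<Sum>m\<in>M. c u m * f u m s)" by (rule Ck_on_sum[OF _ M]) (use f u in auto)
  qed simp
  then show ?thesis by simp
qed

lemma Ck_on_cmult:
  fixes f :: "real \<Rightarrow> real"
  assumes "Ck_on n {-1..1} f"
  shows "Ck_on n {-1..1} (\<lambda>x. c * f x)"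
  using Ck_on_sum[of "-1" 1 "{0::nat}" n "\<lambda>_. f" "\<lambda>_. c"] assms by simp

lemma vecI_inner:
  fixes F :: "real \<Rightarrow> 'a::euclidean_space"
  assumes u: "u \<in> Basis"
  shows "vecI Ih F s \<bullet> u = Ih (\<lambda>x. F x \<bullet> u) s"
proof -
  have "vecI Ih F s \<bullet> u = (\<Sum>u'\<in>Basis. Ih (\<lambda>x. F x \<bullet> u') s * (u' \<bullet> u))"
    unfolding vecI_def by (simp add: inner_sum_left)
  also have "\<dots> = (\<Sum>u'\<in>Basis. if u' = u then Ih (\<lambda>x. F x \<bullet> u) s else 0)"
    by (intro sum.cong refl) (use u in \<open>auto simp: inner_Basis\<close>)
  also have "\<dots> = Ih (\<lambda>x. F x \<bullet> u) s" using u by simp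
  finally show ?thesis .
qed

text \<open>The right-hand side \<beta>_\<rho>(v) of the reference system: the rows of ref_row applied to the
pulled back component s \<mapsto> v (T_n s) \<bullet> u, with Q' replaced by Ih of its derivative.\<close>
definition ref_data :: "nat \<Rightarrow> ((real\<Rightarrow>real)\<Rightarrow>real) \<Rightarrow> ((real \<Rightarrow> real) \<Rightarrow> real \<Rightarrow> real) \<Rightarrow> real \<Rightarrow> real
     \<Rightarrow> (real \<Rightarrow> 'a::euclidean_space) \<Rightarrow> 'a \<Rightarrow> nat \<Rightarrow> real" where
  "ref_data k Jh Ih a b v u \<rho> =
    (if \<rho> < nleft k then nderiv {-1..1} \<rho> (\<lambda>s. v (Tmap a b s) \<bullet> u) (-1)
     else if \<rho> < k then nderiv {-1..1} (\<rho> - nleft k + 1) (\<lambda>s. v (Tmap a b s) \<bullet> u) 1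
     else Jh (\<lambda>s. s^(\<rho>-k) * Ih (nderiv {-1..1} 1 (\<lambda>s. v (Tmap a b s) \<bullet> u)) s)
        + (if k = 0 then (v (Tmap a b (-1)) \<bullet> u) * (-1)^(\<rho>-k) else 0))"

lemma ref_data_moment: "ref_data k Jh Ih a b v u (k + m) = Jh (\<lambda>s. s^m * Ih (nderiv {-1..1} 1 (\<lambda>s. v (Tmap a b s) \<bullet> u)) s)
        + (if k = 0 then (v (Tmap a b (-1)) \<bullet> u) * (-1)^m else 0)"
  using nleft_le[of k] unfolding ref_data_def by auto

section \<open>The local estimate\<close>

text \<open>K plays the role of k_\<J>; Jh_bound and Ih_bound are (A2) and (A3) for scalar functions.\<close>
locale Jn_setting =
  fixes r k kJs kI K :: nat
    and Jh :: "(real \<Rightarrow> real) \<Rightarrow> real"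
    and Ih :: "(real \<Rightarrow> real) \<Rightarrow> real \<Rightarrow> real"
    and C0 C1 :: real
  assumes k_le_r: "k \<le> r"
    and K_ge: "max kI kJs \<le> K"
    and K_ge_k: "k div 2 \<le> K + 1"
    and Jh_linear: "linear_Ck_functional kJs Jh"
    and Ih_linear: "linear_Ck_operator kI Ih"
    and Ih_regular: "Ck_regularizing kI Ih"
    and Jh_bound: "\<forall>f. Ck_on kJs {-1..1} f \<longrightarrow> \<bar>Jh f\<bar> \<le> C0 * (\<Sum>j\<le>kJs. supn {-1..1} (nderiv {-1..1} j f))"
    and Ih_bound: "\<forall>l\<le>kJs. \<forall>f. Ck_on (max kI l) {-1..1} f \<longrightarrow>
                     supn {-1..1} (nderiv {-1..1} l (Ih f)) \<le> C1 * (\<Sum>j\<le>max kI l. supn {-1..1} (nderiv {-1..1} j f))"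
    and C0_nonneg: "0 \<le> C0"
    and C1_nonneg: "0 \<le> C1"
begin

lemma Ih_bound_0:
  "\<forall>f. Ck_on kI {-1..1} f \<longrightarrow> supn {-1..1} (nderiv {-1..1} 0 (Ih f)) \<le> C1 * (\<Sum>j\<le>kI. supn {-1..1} (nderiv {-1..1} j f))"
  using Ih_bound by (metis max_0R zero_le)

lemma Ck_on_Ih:
  assumes "Ck_on K {-1..1} w"
  shows "Ck_on kJs {-1..1} (Ih w)"
  using Ih_regular Ck_on_mono[OF _ assms, of "max kI kJs"] K_ge unfolding Ck_regularizing_def by blast

lemma Jh_moment_bound:
  assumes w: "Ck_on K {-1..1} w"
  shows "\<bar>Jh (\<lambda>s. s ^ m * Ih w s)\<bar> \<le> C0 * real (kJs + 1) ^ (m + 2) * C1 * (\<Sum>j\<le>K. supn {-1..1} (nderiv {-1..1} j w))"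
proof -
  define W where "W = (\<Sum>j\<le>K. supn {-1..1} (nderiv {-1..1} j w))"
  have W0: "0 \<le> W" unfolding W_def by (intro sum_nonneg supn_nonneg_Ck[OF w]) auto
  have IwC: "Ck_on kJs {-1..1} (Ih w)" by (rule Ck_on_Ih[OF w])
  have X: "supn {-1..1} (nderiv {-1..1} i (Ih w)) \<le> C1 * W" if i: "i \<le> kJs" for i
  proof -
    have wi: "Ck_on (max kI i) {-1..1} w" by (rule Ck_on_mono[OF _ w]) (use i K_ge in auto)
    have "supn {-1..1} (nderiv {-1..1} i (Ih w)) \<le> C1 * (\<Sum>j\<le>max kI i. supn {-1..1} (nderiv {-1..1} j w))"
      using Ih_bound i wi by blast
    also have "\<dots> \<le> C1 * W" unfolding W_def
      by (intro mult_left_mono C1_nonneg sum_mono2) (use i K_ge supn_nonneg_Ck[OF w] in auto)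
    finally show ?thesis .
  qed
  have Y: "supn {-1..1} (nderiv {-1..1} j (\<lambda>s. s ^ m * Ih w s)) \<le> real (kJs + 1) ^ (m + 1) * (C1 * W)"
    if j: "j \<le> kJs" for j
  proof -
    have s: "(\<Sum>i\<le>j. supn {-1..1} (nderiv {-1..1} i (Ih w))) \<le> real (j + 1) * (C1 * W)"
      using sum_mono[of "{..j}" "\<lambda>i. supn {-1..1} (nderiv {-1..1} i (Ih w))" "\<lambda>_. C1 * W"] X j by simp
    have "supn {-1..1} (nderiv {-1..1} j (\<lambda>s. s ^ m * Ih w s))
        \<le> real (j + 1) ^ m * (\<Sum>i\<le>j. supn {-1..1} (nderiv {-1..1} i (Ih w)))"
      by (rule supn_le) (use nderiv_power_times_bound[OF IwC, of j _ m] j in auto)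
    also have "\<dots> \<le> real (j + 1) ^ m * (real (j + 1) * (C1 * W))" by (rule mult_left_mono[OF s]) simp
    also have "\<dots> = real (j + 1) ^ (m + 1) * (C1 * W)" by simp
    also have "\<dots> \<le> real (kJs + 1) ^ (m + 1) * (C1 * W)"
      by (intro mult_right_mono power_mono) (use j C1_nonneg W0 in auto)
    finally show ?thesis .
  qed
  have "\<bar>Jh (\<lambda>s. s ^ m * Ih w s)\<bar> \<le> C0 * (\<Sum>j\<le>kJs. supn {-1..1} (nderiv {-1..1} j (\<lambda>s. s ^ m * Ih w s)))"
    using Jh_bound Ck_on_power_times[OF IwC] by blast
  also have "\<dots> \<le> C0 * (\<Sum>j\<le>kJs. real (kJs + 1) ^ (m + 1) * (C1 * W))"
    by (intro mult_left_mono C0_nonneg sum_mono Y) auto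
  also have "\<dots> = C0 * real (kJs + 1) ^ (m + 2) * C1 * W" by (simp add: algebra_simps)
  finally show ?thesis unfolding W_def .
qed

text \<open>Both sides of the variational condition of J_n have this form. The expansion of F \<bullet> \<phi> agrees
with it only on [-1,1], so the locality of Jh (Jh_cong_on) is needed here.\<close>
lemma locJ_inner_expand:
  fixes F \<phi> :: "real \<Rightarrow> 'a::euclidean_space" and g :: "'a \<Rightarrow> real \<Rightarrow> real"
  assumes ab: "a < b"
    and d: "\<forall>u\<in>Basis. \<forall>s. \<phi> (Tmap a b s) \<bullet> u = (\<Sum>m\<le>n. d u m * s ^ m)"
    and g: "\<And>u. Ck_on kJs {-1..1} (g u)"
    and F: "\<And>u s. u \<in> Basis \<Longrightarrow> s \<in> {-1..1} \<Longrightarrow> F (Tmap a b s) \<bullet> u = g u s / ((b - a) / 2)"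
  shows "locJ Jh a b (\<lambda>x. F x \<bullet> \<phi> x) = (\<Sum>u\<in>Basis. \<Sum>m\<le>n. d u m * Jh (\<lambda>s. s ^ m * g u s))"
proof -
  define h where "h = (b - a) / 2"
  have h0: "h > 0" using ab unfolding h_def by simp
  define fL where "fL = (\<lambda>s. F (Tmap a b s) \<bullet> \<phi> (Tmap a b s))"
  define fR where "fR = (\<lambda>s. \<Sum>u\<in>Basis. \<Sum>m\<le>n. (d u m / h) * (s ^ m * g u s))"
  have eqLR: "\<forall>s\<in>{-1..1}. fR s = fL s"
  proof
    fix s :: real assume s: "s \<in> {-1..1}"
    have "fL s = (\<Sum>u\<in>Basis. (F (Tmap a b s) \<bullet> u) * (\<phi> (Tmap a b s) \<bullet> u))"
      unfolding fL_def by (rule euclidean_inner)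
    also have "\<dots> = (\<Sum>u\<in>Basis. (g u s / h) * (\<Sum>m\<le>n. d u m * s ^ m))"
      by (intro sum.cong refl) (use F s d in \<open>auto simp: h_def\<close>)
    also have "\<dots> = fR s" unfolding fR_def by (simp add: sum_distrib_left algebra_simps)
    finally show "fR s = fL s" by simp
  qed
  have mC: "Ck_on kJs {-1..1} (\<lambda>s. s ^ m * g u s)" for m u by (rule Ck_on_power_times[OF g])
  have fRC: "Ck_on kJs {-1..1} fR" unfolding fR_def by (rule Ck_on_double_sum) (use mC in auto)
  have fLC: "Ck_on kJs {-1..1} fL" by (rule Ck_on_cong[OF eqLR fRC])
  have "locJ Jh a b (\<lambda>x. F x \<bullet> \<phi> x) = h * Jh fR"
    using Jh_cong_on[OF Jh_linear Jh_bound fLC fRC] eqLR unfolding locJ_def fL_def h_def by (simp add: o_def)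
  also have "\<dots> = (\<Sum>u\<in>Basis. \<Sum>m\<le>n. h * ((d u m / h) * Jh (\<lambda>s. s ^ m * g u s)))"
    unfolding fR_def Jh_double_sum[OF Jh_linear finite_Basis finite_atMost mC] by (simp add: sum_distrib_left)
  also have "\<dots> = (\<Sum>u\<in>Basis. \<Sum>m\<le>n. d u m * Jh (\<lambda>s. s ^ m * g u s))"
    using h0 by simp
  finally show ?thesis .
qed

lemma test_lhs_expand:
  fixes p \<phi> :: "real \<Rightarrow> 'a::euclidean_space" and Q :: "'a \<Rightarrow> real poly"
  assumes ab: "a < b" and pv: "p \<in> vpolys r"
    and Q: "\<forall>u\<in>Basis. \<forall>s. poly (Q u) s = p (Tmap a b s) \<bullet> u"
    and d: "\<forall>u\<in>Basis. \<forall>s. \<phi> (Tmap a b s) \<bullet> u = (\<Sum>m\<le>n. d u m * s ^ m)"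
  shows "locJ Jh a b (\<lambda>x. nderiv {a..b} 1 p x \<bullet> \<phi> x) + (if k = 0 then p a \<bullet> \<phi> a else 0)
       = (\<Sum>u\<in>Basis. \<Sum>m\<le>n. d u m * (Jh (\<lambda>s. s ^ m * poly (pderiv (Q u)) s)
                                        + (if k = 0 then poly (Q u) (-1) * (-1) ^ m else 0)))"
proof -
  have pC: "Ck_on 1 {a..b} p" by (rule Ck_on_vpolys[OF pv ab])
  have "nderiv {a..b} 1 p (Tmap a b s) \<bullet> u = poly (pderiv (Q u)) s / ((b - a) / 2)"
    if u: "u \<in> Basis" and s: "s \<in> {-1..1}" for u s
  proof -
    have "(\<lambda>s. p (Tmap a b s) \<bullet> u) = poly (Q u)" using Q u by auto
    then have "poly (pderiv (Q u)) s = (b - a) / 2 * (nderiv {a..b} 1 p (Tmap a b s) \<bullet> u)"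
      using nderiv_poly[of "-1" 1 s 1 "Q u"] nderiv_Tmap_component[OF ab pC order_refl s, of u] s by simp
    then show ?thesis using ab by (simp add: field_simps)
  qed
  then have "locJ Jh a b (\<lambda>x. nderiv {a..b} 1 p x \<bullet> \<phi> x)
      = (\<Sum>u\<in>Basis. \<Sum>m\<le>n. d u m * Jh (\<lambda>s. s ^ m * poly (pderiv (Q u)) s))"
    by (intro locJ_inner_expand[OF ab d Ck_on_poly]) auto
  moreover have "p a \<bullet> \<phi> a = (\<Sum>u\<in>Basis. \<Sum>m\<le>n. d u m * (poly (Q u) (-1) * (-1) ^ m))"
    unfolding Tmap_left_inner_expand[OF d, of p] using Q by (intro sum.cong refl) auto
  ultimately show ?thesis by (cases "k = 0") (simp_all add: algebra_simps sum.distrib)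
qed

lemma locI_Tmap_component:
  fixes v :: "real \<Rightarrow> 'a::euclidean_space"
  assumes ab: "a < b" and vC: "Ck_on (K + 1) {a..b} v" and u: "u \<in> Basis" and s: "s \<in> {-1..1}"
  shows "locI Ih a b (nderiv {a..b} 1 v) (Tmap a b s) \<bullet> u
       = Ih (nderiv {-1..1} 1 (\<lambda>s. v (Tmap a b s) \<bullet> u)) s / ((b - a) / 2)"
proof -
  define h where "h = (b - a) / 2"
  have h0: "h > 0" using ab unfolding h_def by simp
  define w where "w = nderiv {-1..1} 1 (\<lambda>s. v (Tmap a b s) \<bullet> u)"
  have vT: "Ck_on (K + 1) {-1..1} (\<lambda>s. v (Tmap a b s))" by (rule Ck_on_Tmap_comp(1)[OF ab vC])
  have "Ck_on (Suc K) {-1..1} (\<lambda>s. v (Tmap a b s) \<bullet> u)" using Ck_on_inner(1)[OF _ vT, of u] by simp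
  then have "Ck_on K {-1..1} w" unfolding w_def by (rule Ck_on_nderiv_1)
  then have wC: "Ck_on kI {-1..1} w" by (rule Ck_on_mono[rotated]) (use K_ge in auto)
  have v'C: "Ck_on K {a..b} (nderiv {a..b} 1 v)" by (rule Ck_on_nderiv_1) (use vC in simp)
  have gC: "Ck_on kI {-1..1} (\<lambda>x. nderiv {a..b} 1 v (Tmap a b x) \<bullet> u)"
    by (rule Ck_on_mono[OF _ Ck_on_inner(1)[OF _ Ck_on_Tmap_comp(1)[OF ab v'C]]]) (use K_ge in auto)
  have wg: "nderiv {a..b} 1 v (Tmap a b x) \<bullet> u = 1 / h * w x" if x: "x \<in> {-1..1}" for x
    using Ck_on_inner(2)[OF _ vT, of 1 x u] Ck_on_Tmap_comp(2)[OF ab vC, of 1 x] x h0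
    unfolding w_def h_def by (simp add: field_simps)
  have "locI Ih a b (nderiv {a..b} 1 v) (Tmap a b s) \<bullet> u = Ih (\<lambda>x. nderiv {a..b} 1 v (Tmap a b x) \<bullet> u) s"
    unfolding locI_def using Tinv_Tmap[OF ab] vecI_inner[OF u] by (simp add: o_def)
  also have "\<dots> = Ih (\<lambda>x. 1 / h * w x) s"
    by (rule Ih_cong_on[OF Ih_linear Ih_regular Ih_bound_0 gC Ck_on_cmult[OF wC] _ s]) (use wg in auto)
  also have "\<dots> = Ih w s / h" using Ih_scale[OF Ih_linear wC s, of "1 / h"] by simp
  finally show ?thesis unfolding w_def h_def .
qed

lemma test_rhs_expand:
  fixes v \<phi> :: "real \<Rightarrow> 'a::euclidean_space"
  assumes ab: "a < b" and vC: "Ck_on (K + 1) {a..b} v"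
    and d: "\<forall>u\<in>Basis. \<forall>s. \<phi> (Tmap a b s) \<bullet> u = (\<Sum>m\<le>n. d u m * s ^ m)"
  shows "locJ Jh a b (\<lambda>x. locI Ih a b (nderiv {a..b} 1 v) x \<bullet> \<phi> x) + (if k = 0 then v a \<bullet> \<phi> a else 0)
       = (\<Sum>u\<in>Basis. \<Sum>m\<le>n. d u m * (Jh (\<lambda>s. s ^ m * Ih (nderiv {-1..1} 1 (\<lambda>s. v (Tmap a b s) \<bullet> u)) s)
                                        + (if k = 0 then (v (Tmap a b (-1)) \<bullet> u) * (-1) ^ m else 0)))"
proof -
  have vT: "Ck_on (K + 1) {-1..1} (\<lambda>s. v (Tmap a b s))" by (rule Ck_on_Tmap_comp(1)[OF ab vC])
  have "Ck_on kJs {-1..1} (Ih (nderiv {-1..1} 1 (\<lambda>s. v (Tmap a b s) \<bullet> u)))" for u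
    by (rule Ck_on_Ih, rule Ck_on_nderiv_1) (use Ck_on_inner(1)[OF _ vT, of u] in simp)
  then have "locJ Jh a b (\<lambda>x. locI Ih a b (nderiv {a..b} 1 v) x \<bullet> \<phi> x)
      = (\<Sum>u\<in>Basis. \<Sum>m\<le>n. d u m * Jh (\<lambda>s. s ^ m * Ih (nderiv {-1..1} 1 (\<lambda>s. v (Tmap a b s) \<bullet> u)) s))"
    by (intro locJ_inner_expand[OF ab d] locI_Tmap_component[OF ab vC])
  then show ?thesis using Tmap_left_inner_expand[OF d, of v]
    by (cases "k = 0") (simp_all add: algebra_simps sum.distrib)
qed

lemma Jn_left_conditions_iff:
  fixes v p :: "real \<Rightarrow> 'a::euclidean_space"
  assumes ab: "a < b" and vC: "Ck_on (K + 1) {a..b} v" and pv: "p \<in> vpolys r"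
    and Q: "\<forall>u\<in>Basis. \<forall>s. poly (Q u) s = p (Tmap a b s) \<bullet> u"
  shows "(1 \<le> k \<longrightarrow> (\<forall>i \<le> (k - 1) div 2. nderiv {a..b} i p a = nderiv {a..b} i v a))
     \<longleftrightarrow> (\<forall>\<rho><nleft k. \<forall>u\<in>Basis. ref_row k Jh \<rho> (Q u) = ref_data k Jh Ih a b v u \<rho>)"
proof -
  have "(\<forall>u\<in>Basis. ref_row k Jh \<rho> (Q u) = ref_data k Jh Ih a b v u \<rho>)
      \<longleftrightarrow> nderiv {a..b} \<rho> p a = nderiv {a..b} \<rho> v a" if "\<rho> < nleft k" for \<rho>
  proof -
    have "\<rho> \<le> K + 1" using that K_ge_k unfolding nleft_def by (auto split: if_splits)
    then have "nderiv {a..b} \<rho> p (Tmap a b (-1)) = nderiv {a..b} \<rho> v (Tmap a b (-1)) \<longleftrightarrow>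
       (\<forall>u\<in>Basis. poly ((pderiv ^^ \<rho>) (Q u)) (-1) = nderiv {-1..1} \<rho> (\<lambda>s. v (Tmap a b s) \<bullet> u) (-1))"
      by (intro nderiv_Tmap_eq_iff[OF ab pv vC _ _ Q]) auto
    then show ?thesis unfolding ref_row_def ref_data_def Tmap_m1 using that by simp
  qed
  moreover have "\<rho> < nleft k \<longleftrightarrow> 1 \<le> k \<and> \<rho> \<le> (k - 1) div 2" for \<rho> unfolding nleft_def by auto
  ultimately show ?thesis by auto
qed

lemma Jn_right_conditions_iff:
  fixes v p :: "real \<Rightarrow> 'a::euclidean_space"
  assumes ab: "a < b" and vC: "Ck_on (K + 1) {a..b} v" and pv: "p \<in> vpolys r"
    and Q: "\<forall>u\<in>Basis. \<forall>s. poly (Q u) s = p (Tmap a b s) \<bullet> u"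
  shows "(2 \<le> k \<longrightarrow> (\<forall>i\<in>{1..k div 2}. nderiv {a..b} i p b = nderiv {a..b} i v b))
     \<longleftrightarrow> (\<forall>\<rho>. nleft k \<le> \<rho> \<and> \<rho> < k \<longrightarrow> (\<forall>u\<in>Basis. ref_row k Jh \<rho> (Q u) = ref_data k Jh Ih a b v u \<rho>))"
proof -
  have row: "(\<forall>u\<in>Basis. ref_row k Jh \<rho> (Q u) = ref_data k Jh Ih a b v u \<rho>)
      \<longleftrightarrow> nderiv {a..b} (\<rho> - nleft k + 1) p b = nderiv {a..b} (\<rho> - nleft k + 1) v b"
    if "nleft k \<le> \<rho>" "\<rho> < k" for \<rho>
  proof -
    have "\<rho> - nleft k + 1 \<le> K + 1" using that K_ge_k unfolding nleft_def by (auto split: if_splits)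
    then have "nderiv {a..b} (\<rho> - nleft k + 1) p (Tmap a b 1) = nderiv {a..b} (\<rho> - nleft k + 1) v (Tmap a b 1)
      \<longleftrightarrow> (\<forall>u\<in>Basis. poly ((pderiv ^^ (\<rho> - nleft k + 1)) (Q u)) 1
                      = nderiv {-1..1} (\<rho> - nleft k + 1) (\<lambda>s. v (Tmap a b s) \<bullet> u) 1)"
      by (intro nderiv_Tmap_eq_iff[OF ab pv vC _ _ Q]) auto
    then show ?thesis unfolding ref_row_def ref_data_def Tmap_1 using that by simp
  qed
  have "(\<exists>\<rho>. nleft k \<le> \<rho> \<and> \<rho> < k \<and> i = \<rho> - nleft k + 1) \<longleftrightarrow> 2 \<le> k \<and> i \<in> {1..k div 2}" for i
  proof
    assume "2 \<le> k \<and> i \<in> {1..k div 2}"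
    then show "\<exists>\<rho>. nleft k \<le> \<rho> \<and> \<rho> < k \<and> i = \<rho> - nleft k + 1"
      by (intro exI[of _ "nleft k + i - 1"]) (auto simp: nleft_def)
  qed (auto simp: nleft_def)
  then show ?thesis using row by (metis (no_types, lifting))
qed

lemma Jn_variational_iff:
  fixes v p :: "real \<Rightarrow> 'a::euclidean_space"
  assumes ab: "a < b" and vC: "Ck_on (K + 1) {a..b} v" and pv: "p \<in> vpolys r"
    and Q: "\<forall>u\<in>Basis. \<forall>s. poly (Q u) s = p (Tmap a b s) \<bullet> u"
  shows "(\<forall>\<phi>\<in>vpolys (r - k).
        locJ Jh a b (\<lambda>x. nderiv {a..b} 1 p x \<bullet> \<phi> x) + (if k = 0 then p a \<bullet> \<phi> a else 0)
      = locJ Jh a b (\<lambda>x. locI Ih a b (nderiv {a..b} 1 v) x \<bullet> \<phi> x) + (if k = 0 then v a \<bullet> \<phi> a else 0))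
     \<longleftrightarrow> (\<forall>m\<le>r - k. \<forall>u\<in>Basis. ref_row k Jh (k + m) (Q u) = ref_data k Jh Ih a b v u (k + m))"
    (is "(\<forall>\<phi>\<in>_. ?lhs \<phi> = ?rhs \<phi>) \<longleftrightarrow> ?rows")
proof
  assume H: "\<forall>\<phi>\<in>vpolys (r - k). ?lhs \<phi> = ?rhs \<phi>"
  show ?rows
  proof (intro allI impI ballI)
    fix m and u0 :: 'a assume m: "m \<le> r - k" and u0: "u0 \<in> Basis"
    define \<phi> where "\<phi> = (\<lambda>x. Tinv a b x ^ m *\<^sub>R u0)"
    define d where "d = (\<lambda>u m'. if u = u0 \<and> m' = m then 1 else (0::real))"
    have d: "\<forall>u\<in>Basis. \<forall>s. \<phi> (Tmap a b s) \<bullet> u = (\<Sum>m'\<le>r - k. d u m' * s ^ m')"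
      unfolding \<phi>_def d_def by (rule Tinv_power_scaleR_Tmap_components[OF ab u0 m])
    have "\<phi> \<in> vpolys (r - k)" unfolding \<phi>_def by (rule vpolys_mono[OF m Tinv_power_scaleR_vpolys])
    with H have "?lhs \<phi> = ?rhs \<phi>" by blast
    then show "ref_row k Jh (k + m) (Q u0) = ref_data k Jh Ih a b v u0 (k + m)"
      unfolding test_lhs_expand[OF ab pv Q d] test_rhs_expand[OF ab vC d] d_def sum_double_delta[OF u0 m]
        ref_row_moment ref_data_moment .
  qed
next
  assume H: ?rows
  show "\<forall>\<phi>\<in>vpolys (r - k). ?lhs \<phi> = ?rhs \<phi>"
  proof
    fix \<phi> :: "real \<Rightarrow> 'a" assume \<phi>v: "\<phi> \<in> vpolys (r - k)"
    obtain \<Phi> where \<Phi>: "\<forall>u\<in>Basis. degree (\<Phi> u) \<le> r - k \<and> (\<forall>s. poly (\<Phi> u) s = \<phi> (Tmap a b s) \<bullet> u)"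
      using vpolys_Tmap_component_poly[OF \<phi>v] by metis
    have d: "\<forall>u\<in>Basis. \<forall>s. \<phi> (Tmap a b s) \<bullet> u = (\<Sum>m\<le>r - k. coeff (\<Phi> u) m * s ^ m)"
    proof (intro ballI allI)
      fix u :: 'a and s :: real assume u: "u \<in> Basis"
      have "poly (\<Phi> u) s = (\<Sum>m\<le>r - k. coeff (\<Phi> u) m * s ^ m)"
        using \<Phi> u by (subst poly_as_sum_of_monoms'[symmetric, of "\<Phi> u" "r - k"]) (auto simp: poly_sum poly_monom)
      then show "\<phi> (Tmap a b s) \<bullet> u = (\<Sum>m\<le>r - k. coeff (\<Phi> u) m * s ^ m)" using \<Phi> u by simp
    qed
    show "?lhs \<phi> = ?rhs \<phi>"
      unfolding test_lhs_expand[OF ab pv Q d] test_rhs_expand[OF ab vC d]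
      using H unfolding ref_row_moment ref_data_moment by (intro sum.cong refl) auto
  qed
qed

lemma Jn_cond_iff_ref_rows:
  fixes v p :: "real \<Rightarrow> 'a::euclidean_space"
  assumes ab: "a < b" and vC: "Ck_on (K + 1) {a..b} v" and pv: "p \<in> vpolys r"
    and Q: "\<forall>u\<in>Basis. \<forall>s. poly (Q u) s = p (Tmap a b s) \<bullet> u"
  shows "Jn_cond r k Jh Ih a b v p \<longleftrightarrow> (\<forall>u\<in>Basis. \<forall>\<rho>\<le>r. ref_row k Jh \<rho> (Q u) = ref_data k Jh Ih a b v u \<rho>)"
proof -
  have "(\<forall>u\<in>Basis. \<forall>\<rho>\<le>r. ref_row k Jh \<rho> (Q u) = ref_data k Jh Ih a b v u \<rho>)
      \<longleftrightarrow> (\<forall>\<rho>\<le>r. \<forall>u\<in>Basis. ref_row k Jh \<rho> (Q u) = ref_data k Jh Ih a b v u \<rho>)" by blast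
  also have "\<dots> \<longleftrightarrow> (\<forall>\<rho><nleft k. \<forall>u\<in>Basis. ref_row k Jh \<rho> (Q u) = ref_data k Jh Ih a b v u \<rho>)
      \<and> (\<forall>\<rho>. nleft k \<le> \<rho> \<and> \<rho> < k \<longrightarrow> (\<forall>u\<in>Basis. ref_row k Jh \<rho> (Q u) = ref_data k Jh Ih a b v u \<rho>))
      \<and> (\<forall>m\<le>r - k. \<forall>u\<in>Basis. ref_row k Jh (k + m) (Q u) = ref_data k Jh Ih a b v u (k + m))"
    by (rule all_le_split_three[OF k_le_r nleft_le])
  finally show ?thesis
    unfolding Jn_cond_def Jn_left_conditions_iff[OF assms] Jn_right_conditions_iff[OF assms]
      Jn_variational_iff[OF assms]
    using pv by blast
qed

lemma Jn_ref_components: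
  fixes v :: "real \<Rightarrow> 'a::euclidean_space"
  assumes ab: "a < b" and vC: "Ck_on (K + 1) {a..b} v"
    and B: "\<forall>y. (\<forall>\<rho>\<le>r. ref_row k Jh \<rho> (\<Sum>i\<le>r. monom (\<Sum>l\<le>r. B i l * y l) i) = y \<rho>)
          \<and> (\<forall>Q. degree Q \<le> r \<and> (\<forall>\<rho>\<le>r. ref_row k Jh \<rho> Q = y \<rho>) \<longrightarrow> (\<forall>i\<le>r. coeff Q i = (\<Sum>l\<le>r. B i l * y l)))"
  shows "Jn r k Jh Ih a b v \<in> vpolys r \<and>
    (\<forall>u\<in>Basis. \<forall>s. poly (\<Sum>i\<le>r. monom (\<Sum>l\<le>r. B i l * ref_data k Jh Ih a b v u l) i) s
                  = Jn r k Jh Ih a b v (Tmap a b s) \<bullet> u)"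
proof -
  define Q0 where "Q0 = (\<lambda>u. \<Sum>i\<le>r. monom (\<Sum>l\<le>r. B i l * ref_data k Jh Ih a b v u l) i)"
  define p0 where "p0 = (\<lambda>x. \<Sum>u\<in>(Basis::'a set). poly (Q0 u) (Tinv a b x) *\<^sub>R u)"
  have dQ0: "degree (Q0 u) \<le> r" for u unfolding Q0_def by (rule degree_monom_sum)
  have p0v: "p0 \<in> vpolys r" and Q0: "\<forall>u\<in>Basis. \<forall>s. poly (Q0 u) s = p0 (Tmap a b s) \<bullet> u"
    using Tmap_components_vpolys[where Q=Q0, OF ab dQ0] unfolding p0_def by auto
  have c0: "Jn_cond r k Jh Ih a b v p0"
    using Jn_cond_iff_ref_rows[OF ab vC p0v Q0] B unfolding Q0_def by blast
  have "p1 = p0" if c1: "Jn_cond r k Jh Ih a b v p1" for p1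
  proof -
    have p1v: "p1 \<in> vpolys r" using c1 unfolding Jn_cond_def by blast
    obtain Q1 where Q1: "\<forall>u\<in>Basis. degree (Q1 u) \<le> r \<and> (\<forall>s. poly (Q1 u) s = p1 (Tmap a b s) \<bullet> u)"
      using vpolys_Tmap_component_poly[OF p1v] by metis
    have "\<forall>u\<in>Basis. \<forall>\<rho>\<le>r. ref_row k Jh \<rho> (Q1 u) = ref_data k Jh Ih a b v u \<rho>"
      using Jn_cond_iff_ref_rows[OF ab vC p1v] Q1 c1 by blast
    then have "Q1 u = Q0 u" if u: "u \<in> Basis" for u
    proof (intro poly_eqI)
      fix i
      show "coeff (Q1 u) i = coeff (Q0 u) i"
      proof (cases "i \<le> r")
        case True
        then show ?thesis using B \<open>\<forall>u\<in>Basis. \<forall>\<rho>\<le>r. _\<close> u Q1 unfolding Q0_def coeff_monom_sum by auto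
      next
        case False
        then have "coeff (Q1 u) i = 0" using Q1 u by (intro coeff_eq_0) auto
        then show ?thesis using False unfolding Q0_def coeff_monom_sum by simp
      qed
    qed
    moreover have "p1 = (\<lambda>x. \<Sum>u\<in>Basis. poly (Q1 u) (Tinv a b x) *\<^sub>R u)"
      by (rule components_Tmap_representation[OF ab]) (use Q1 in blast)
    ultimately show "p1 = p0" unfolding p0_def by (auto intro: sum.cong)
  qed
  then have "Jn r k Jh Ih a b v = p0"
    unfolding Jn_def by (rule the_equality[where P="Jn_cond r k Jh Ih a b v", OF c0])
  then show ?thesis using p0v Q0 unfolding Q0_def by simp
qed

lemma ref_data_moment_bound:
  assumes vh: "Ck_on (K + 1) {-1..1} vh" and m: "m \<le> r"
  shows "\<bar>Jh (\<lambda>s. s ^ m * Ih (nderiv {-1..1} 1 vh) s)\<bar>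
       \<le> C0 * real (kJs + 1) ^ (r + 2) * C1 * (\<Sum>j\<le>K + 1. supn {-1..1} (nderiv {-1..1} j vh))"
proof -
  have "(\<Sum>j\<le>K. supn {-1..1} (nderiv {-1..1} j (nderiv {-1..1} 1 vh)))
      \<le> supn {-1..1} (nderiv {-1..1} 0 vh) + (\<Sum>j\<le>K. supn {-1..1} (nderiv {-1..1} (Suc j) vh))"
    unfolding nderiv_nderiv_1 using supn_nonneg_Ck[OF vh, of 0] by simp
  also have "\<dots> = (\<Sum>j\<le>K + 1. supn {-1..1} (nderiv {-1..1} j vh))"
    by (simp only: Suc_eq_plus1[symmetric] sum.atMost_Suc_shift)
  finally have W: "(\<Sum>j\<le>K. supn {-1..1} (nderiv {-1..1} j (nderiv {-1..1} 1 vh)))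
      \<le> (\<Sum>j\<le>K + 1. supn {-1..1} (nderiv {-1..1} j vh))" .
  have W0: "0 \<le> (\<Sum>j\<le>K + 1. supn {-1..1} (nderiv {-1..1} j vh))"
    by (intro sum_nonneg supn_nonneg_Ck[OF vh]) auto
  have "\<bar>Jh (\<lambda>s. s ^ m * Ih (nderiv {-1..1} 1 vh) s)\<bar>
      \<le> C0 * real (kJs + 1) ^ (m + 2) * C1 * (\<Sum>j\<le>K. supn {-1..1} (nderiv {-1..1} j (nderiv {-1..1} 1 vh)))"
    by (rule Jh_moment_bound, rule Ck_on_nderiv_1) (use vh in simp)
  also have "\<dots> \<le> C0 * real (kJs + 1) ^ (m + 2) * C1 * (\<Sum>j\<le>K + 1. supn {-1..1} (nderiv {-1..1} j vh))"
    by (intro mult_left_mono W) (use C0_nonneg C1_nonneg in auto)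
  also have "\<dots> \<le> C0 * real (kJs + 1) ^ (r + 2) * C1 * (\<Sum>j\<le>K + 1. supn {-1..1} (nderiv {-1..1} j vh))"
    by (intro mult_right_mono W0 mult_left_mono C0_nonneg C1_nonneg power_increasing) (use m in auto)
  finally show ?thesis .
qed

lemma ref_data_bound:
  fixes v :: "real \<Rightarrow> 'a::euclidean_space"
  assumes ab: "a < b" and vC: "Ck_on (K + 1) {a..b} v" and \<rho>: "\<rho> \<le> r"
  shows "\<bar>ref_data k Jh Ih a b v u \<rho>\<bar>
       \<le> (C0 * real (kJs + 1) ^ (r + 2) * C1 + 1) * (\<Sum>j\<le>K + 1. supn {-1..1} (nderiv {-1..1} j (\<lambda>s. v (Tmap a b s) \<bullet> u)))"
proof -
  define vh where "vh = (\<lambda>s. v (Tmap a b s) \<bullet> u)"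
  define W where "W = (\<Sum>j\<le>K + 1. supn {-1..1} (nderiv {-1..1} j vh))"
  define Kc where "Kc = C0 * real (kJs + 1) ^ (r + 2) * C1"
  have Kc0: "0 \<le> Kc" unfolding Kc_def using C0_nonneg C1_nonneg by simp
  have vhC: "Ck_on (K + 1) {-1..1} vh"
    unfolding vh_def by (rule Ck_on_inner(1)[OF _ Ck_on_Tmap_comp(1)[OF ab vC]]) simp
  have W0: "0 \<le> W" unfolding W_def by (intro sum_nonneg supn_nonneg_Ck[OF vhC]) auto
  have pt: "\<bar>nderiv {-1..1} j vh s\<bar> \<le> W" if j: "j \<le> K + 1" and s: "s \<in> {-1..1}" for j s
  proof -
    have "\<bar>nderiv {-1..1} j vh s\<bar> \<le> supn {-1..1} (nderiv {-1..1} j vh)"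
      using supn_upper[OF Ck_on_continuous[OF vhC j] compact_Icc order_refl s] by simp
    also have "\<dots> \<le> W" unfolding W_def by (rule member_le_sum) (use j supn_nonneg_Ck[OF vhC] in auto)
    finally show ?thesis .
  qed
  consider "\<rho> < nleft k" | "nleft k \<le> \<rho> \<and> \<rho> < k" | "k \<le> \<rho>" by linarith
  then have "\<bar>ref_data k Jh Ih a b v u \<rho>\<bar> \<le> Kc * W + W"
  proof cases
    case 1
    then have "\<rho> \<le> K + 1" using K_ge_k unfolding nleft_def by (auto split: if_splits)
    then have "\<bar>ref_data k Jh Ih a b v u \<rho>\<bar> \<le> W" using 1 pt[of \<rho> "-1"] unfolding ref_data_def vh_def by simp
    then show ?thesis using mult_nonneg_nonneg[OF Kc0 W0] by linarith
  next
    case 2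
    then have "\<rho> - nleft k + 1 \<le> k div 2" unfolding nleft_def by (auto split: if_splits)
    then have "\<rho> - nleft k + 1 \<le> K + 1" using K_ge_k by simp
    then have "\<bar>ref_data k Jh Ih a b v u \<rho>\<bar> \<le> W"
      using 2 pt[of "\<rho> - nleft k + 1" 1] unfolding ref_data_def vh_def by simp
    then show ?thesis using mult_nonneg_nonneg[OF Kc0 W0] by linarith
  next
    case 3
    then obtain m where m: "\<rho> = k + m" using le_Suc_ex by blast
    then have "m \<le> r" using \<rho> by simp
    then have J: "\<bar>Jh (\<lambda>s. s ^ m * Ih (nderiv {-1..1} 1 vh) s)\<bar> \<le> Kc * W"
      unfolding Kc_def W_def by (rule ref_data_moment_bound[OF vhC])
    have "\<bar>(if k = 0 then (v (Tmap a b (-1)) \<bullet> u) * (-1) ^ m else 0)\<bar> \<le> W"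
      using pt[of 0 "-1"] W0 unfolding vh_def by (auto simp: abs_mult)
    moreover have "ref_data k Jh Ih a b v u \<rho>
        = Jh (\<lambda>s. s ^ m * Ih (nderiv {-1..1} 1 vh) s) + (if k = 0 then (v (Tmap a b (-1)) \<bullet> u) * (-1) ^ m else 0)"
      unfolding m ref_data_moment vh_def ..
    ultimately show ?thesis using J by linarith
  qed
  then show ?thesis unfolding Kc_def W_def vh_def by (simp add: algebra_simps)
qed

lemma Jn_derivative_bound:
  assumes l: "l \<le> r"
    and B: "\<forall>y. (\<forall>\<rho>\<le>r. ref_row k Jh \<rho> (\<Sum>i\<le>r. monom (\<Sum>l\<le>r. B i l * y l) i) = y \<rho>)
          \<and> (\<forall>Q. degree Q \<le> r \<and> (\<forall>\<rho>\<le>r. ref_row k Jh \<rho> Q = y \<rho>) \<longrightarrow> (\<forall>i\<le>r. coeff Q i = (\<Sum>l\<le>r. B i l * y l)))"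
  shows "\<exists>C. \<forall>a b (v :: real \<Rightarrow> 'a::euclidean_space). a < b \<and> Ck_on (K + 1) {a..b} v \<longrightarrow>
           supn {a<..b} (nderiv {a..b} l (Jn r k Jh Ih a b v))
             \<le> C * (\<Sum>j\<le>K + 1. ((b - a) / 2) powi (int j - int l) * supn {a<..b} (nderiv {a..b} j v))"
proof -
  define Kc where "Kc = C0 * real (kJs+1)^(r+2) * C1 + 1"
  have Kc0: "0 \<le> Kc" unfolding Kc_def using C0_nonneg C1_nonneg by simp
  define G where "G = (\<Sum>i\<le>r. (\<Sum>\<rho>\<le>r. \<bar>B i \<rho>\<bar>) * real i ^ l)"
  have "supn {a<..b} (nderiv {a..b} l (Jn r k Jh Ih a b v))
          \<le> (real DIM('a) * G * Kc) * (\<Sum>j\<le>K + 1. ((b - a) / 2) powi (int j - int l) * supn {a<..b} (nderiv {a..b} j v))"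
    if ab: "a < b" and vC: "Ck_on (K + 1) {a..b} v" for a b and v :: "real \<Rightarrow> 'a"
  proof -
    define h where "h = (b - a) / 2"
    have h0: "0 < h" using ab unfolding h_def by simp
    define V where "V = (\<Sum>j\<le>K + 1. h ^ j * supn {a<..b} (nderiv {a..b} j v))"
    define c where "c = (\<lambda>u i. \<Sum>l\<le>r. B i l * ref_data k Jh Ih a b v u l)"
    have pv: "Jn r k Jh Ih a b v \<in> vpolys r"
      and comp: "\<forall>u\<in>Basis. \<forall>s. poly (\<Sum>i\<le>r. monom (c u i) i) s = Jn r k Jh Ih a b v (Tmap a b s) \<bullet> u"
      using Jn_ref_components[OF ab vC B] unfolding c_def by auto
    have "\<bar>ref_data k Jh Ih a b v u \<rho>\<bar> \<le> Kc * V" if u: "u \<in> Basis" and \<rho>: "\<rho> \<le> r" for u \<rho>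
    proof -
      have "(\<Sum>j\<le>K + 1. supn {-1..1} (nderiv {-1..1} j (\<lambda>s. v (Tmap a b s) \<bullet> u))) \<le> V"
        unfolding V_def h_def by (intro sum_mono supn_Tmap_component_le[OF ab vC _ u]) auto
      then show ?thesis
        using ref_data_bound[OF ab vC \<rho>, of u] Kc0 unfolding Kc_def
        by (meson mult_left_mono order.trans)
    qed
    then have cb: "\<bar>c u i\<bar> \<le> (\<Sum>\<rho>\<le>r. \<bar>B i \<rho>\<bar>) * (Kc * V)" if u: "u \<in> Basis" for u i
      unfolding c_def sum_distrib_right using u
      by (intro order.trans[OF sum_abs] sum_mono) (simp add: abs_mult mult_left_mono)
    have "supn {a<..b} (nderiv {a..b} l (Jn r k Jh Ih a b v))
        \<le> real DIM('a) * (\<Sum>i\<le>r. (\<Sum>\<rho>\<le>r. \<bar>B i \<rho>\<bar>) * (Kc * V) * real i ^ l) / h ^ l"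
      unfolding h_def by (rule vpolys_Tmap_derivative_bound[OF ab pv comp]) (fact cb)
    also have "\<dots> = (real DIM('a) * G * Kc) * (V / h ^ l)"
      unfolding G_def sum_distrib_right by (simp add: algebra_simps sum_distrib_left sum_divide_distrib)
    also have "V / h ^ l = (\<Sum>j\<le>K + 1. h powi (int j - int l) * supn {a<..b} (nderiv {a..b} j v))"
      unfolding V_def sum_divide_distrib
      by (intro sum.cong refl) (use h0 in \<open>simp add: power_int_diff power_int_of_nat\<close>)
    finally show ?thesis unfolding h_def .
  qed
  then show ?thesis by blast
qed

end

lemma mesh_interval_nonempty:
  fixes t :: "nat \<Rightarrow> real"
  assumes "\<forall>i<N. t i < t (Suc i)" and "1 \<le> n" and "n \<le> N"
  shows "t (n - 1) < t n"
  using assms(1)[rule_format, of "n - 1"] assms(2,3) by simp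

theorem mainTheorem7:
  fixes r k kJs kI :: nat
    and Jh :: "(real \<Rightarrow> real) \<Rightarrow> real"
    and Ih :: "(real \<Rightarrow> real) \<Rightarrow> real \<Rightarrow> real"
  assumes "k \<le> r"
    and linJ: "\<forall>f g (\<alpha>::real) \<beta>. Ck_on kJs {-1..1} f \<and> Ck_on kJs {-1..1} g \<longrightarrow>
                 Jh (\<lambda>s. \<alpha> * f s + \<beta> * g s) = \<alpha> * Jh f + \<beta> * Jh g"
    and linI: "\<forall>f g (\<alpha>::real) \<beta>. Ck_on kI {-1..1} f \<and> Ck_on kI {-1..1} g \<longrightarrow>
                 (\<forall>s\<in>{-1..1}. Ih (\<lambda>x. \<alpha> * f x + \<beta> * g x) s = \<alpha> * Ih f s + \<beta> * Ih g s)"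
    and regI: "\<forall>l f. Ck_on (max kI l) {-1..1} f \<longrightarrow> Ck_on l {-1..1} (Ih f)"
    and A1: "A1 r k Jh"
    and A2: "\<exists>C0. \<forall>\<phi>::real \<Rightarrow> 'a::euclidean_space. Ck_on kJs {-1..1} \<phi> \<longrightarrow>
               norm (vecJ Jh \<phi>) \<le> C0 * (\<Sum>j\<le>kJs. supn {-1..1} (nderiv {-1..1} j \<phi>))"
    and A3: "\<exists>C1. \<forall>l\<le>kJs. \<forall>\<phi>::real \<Rightarrow> 'a. Ck_on (max kI l) {-1..1} \<phi> \<longrightarrow>
               supn {-1..1} (nderiv {-1..1} l (vecI Ih \<phi>))
                 \<le> C1 * (\<Sum>j\<le>max kI l. supn {-1..1} (nderiv {-1..1} j \<phi>))"
  shows "\<forall>l\<le>r. \<exists>C. \<forall>(t::nat \<Rightarrow> real) N n (v::real \<Rightarrow> 'a).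
           (\<forall>i<N. t i < t (Suc i)) \<and> (\<forall>i\<in>{1..N}. t i - t (i - 1) \<le> 1)
           \<and> 1 \<le> n \<and> n \<le> N
           \<and> Ck_on (max (k div 2 - 1) (max kJs kI) + 1) {t (n - 1)..t n} v
         \<longrightarrow> supn {t (n - 1)<..t n} (nderiv {t (n - 1)..t n} l (Jn r k Jh Ih (t (n - 1)) (t n) v))
             \<le> C * (\<Sum>j\<le>max (k div 2 - 1) (max kJs kI) + 1.
                     ((t n - t (n - 1)) / 2) powi (int j - int l)
                     * supn {t (n - 1)<..t n} (nderiv {t (n - 1)..t n} j v))"
proof -
  have L: "linear_Ck_functional kJs Jh" and LI: "linear_Ck_operator kI Ih" and R: "Ck_regularizing kI Ih"
    using linJ linI regI
    unfolding linear_Ck_functional_def linear_Ck_operator_def Ck_regularizing_def by blast+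
  obtain C0 where C0: "0 \<le> C0"
    and JB: "\<forall>f. Ck_on kJs {-1..1} f \<longrightarrow> \<bar>Jh f\<bar> \<le> C0 * (\<Sum>j\<le>kJs. supn {-1..1} (nderiv {-1..1} j f))"
    using scalar_bound_from_A2[OF A2 L] by blast
  obtain C1 where C1: "0 \<le> C1"
    and IB: "\<forall>l\<le>kJs. \<forall>f. Ck_on (max kI l) {-1..1} f \<longrightarrow>
               supn {-1..1} (nderiv {-1..1} l (Ih f)) \<le> C1 * (\<Sum>j\<le>max kI l. supn {-1..1} (nderiv {-1..1} j f))"
    using scalar_bound_from_A3[OF A3 LI R] by blast
  obtain B where B: "\<forall>y. (\<forall>\<rho>\<le>r. ref_row k Jh \<rho> (\<Sum>i\<le>r. monom (\<Sum>l\<le>r. B i l * y l) i) = y \<rho>)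
          \<and> (\<forall>Q. degree Q \<le> r \<and> (\<forall>\<rho>\<le>r. ref_row k Jh \<rho> Q = y \<rho>) \<longrightarrow> (\<forall>i\<le>r. coeff Q i = (\<Sum>l\<le>r. B i l * y l)))"
    using ref_system_invertible[OF \<open>k \<le> r\<close> A1 linear_on_polys_if_linear_Ck_functional[OF L]] by blast
  define K where "K = max (k div 2 - 1) (max kJs kI)"
  interpret Jn_setting r k kJs kI K Jh Ih C0 C1
    by unfold_locales (use \<open>k \<le> r\<close> L LI R JB IB C0 C1 in \<open>auto simp: K_def\<close>)
  show ?thesis
    unfolding K_def[symmetric]
    by (intro allI impI ex_forward[OF Jn_derivative_bound[OF _ B]]) (use mesh_interval_nonempty in blast)+
qed

end
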